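(* Let $w$, $w_1$, $w_2$ be binary words, and let $p_1<p_2<\dots<p_k$ be all lost positions of $w$. Then $1<p_1$ and $p_k<|w|$, and there is a monotonically increasing injective mapping \[\mu:\{p_1,\dots,p_k\}\to\{1,2,\dots,|w|-1\}\] such that for all $i=1,\dots,k$, the position $|w_1|+\mu(p_i)$ is lost in the word $w_1ww_2$ and $\mu(p_i)\le p_i$.
   Context: Words are finite sequences over $\{0,1\}$; $w[i..j]=w[i]\cdots w[j]$; $\bar c$ denotes the letter different from $c$. A period of $w$ is $p\ge1$ with $w[i+p]=w[i]$ for all $1\le i\le|w|-p$. A run of $w$ is an interval $[i..j]$, $1\le i<j\le|w|$, such that with $p$ the least period of $w[i..j]$: $j-i+1\ge 2p$, ($i=1$ or $w[i-1]\ne w[i-1+p]$), and ($j=|w|$ or $w[j+1]\ne w[j+1-p]$). For $c\in\{0,1\}$, $<_c$ is the lexicographic order on words from the letter order $0<_01$, resp. $1<_10$ (proper prefixes are smaller). A nonempty word $x$ is $<$-Lyndon if for every factorization $x=yz$, $y,z$ nonempty, $x\neq zy$ and $x<zy$. For a position $1<i\le|w|$ define: $c_w(i)=\overline{w[i-1]}$; $L_w(i)=\max\{j: w[i..j]$ is $<_{c_w(i)}$-Lyndon$\}$; $D_w(i)=L_w(i)-i+1$; $S_w(i)=\min\{j: D_w(i)$ is a period of $w[j..L_w(i)]\}$; $E_w(i)=\max\{j: D_w(i)$ is a period of $w[i..j]\}$; $R_w(i)=[S_w(i)..E_w(i)]$. For a run $r=[s..e]$ of $w$ with $e=|w|$ and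 $c\in\{0,1\}$ let $r_w(c)=\min\{i: R_w(i)=r$ and $w[i..L_w(i)]$ is $<_c$-Lyndon$\}$, and let $f_w(r)\in\{0,1\}$ be such that $r_w(f_w(r))\ge r_w(\overline{f_w(r)})$, with $f_w(r)=0$ if the period of $w[s..e]$ is one. A position $1<i\le|w|$ is lost in $w$ iff one of: (i) $E_w(i)<|w|$, $S_w(i)>1$ and $R_w(i)$ is not a run; (ii) $E_w(i)<|w|$, $R_w(i)$ is a run, and $i+D_w(i)\le E_w(i)$; (iii) $E_w(i)=|w|$, $R_w(i)$ is a run $r$, $i+D_w(i)\le E_w(i)$, $S_w(i)<i$, and $w[i..L_w(i)]$ is $<_{f_w(r)}$-Lyndon. *)

theory Defs
  imports "HOL-Library.Extended_Nat"
begin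

text \<open>Binary words: lists over bool, with letter 0 = False and 1 = True.
  Positions are 1-based: letter at position i is w ! (i - 1).\<close>

type_synonym word = "bool list"

definition letter :: "word \<Rightarrow> nat \<Rightarrow> bool" where
  "letter w i = w ! (i - 1)"

text \<open>Factor w[i..j] (1-based, inclusive); empty if j < i.\<close>
definition fac :: "word \<Rightarrow> nat \<Rightarrow> nat \<Rightarrow> word" where
  "fac w i j = take (Suc j - i) (drop (i - 1) w)"

definition is_period :: "word \<Rightarrow> nat \<Rightarrow> bool" where
  "is_period w p \<longleftrightarrow> p \<ge> 1 \<and> (\<forall>i. 1 \<le> i \<and> i + p \<le> length w \<longrightarrow> letter w (i + p) = letter w i)"

definition least_period :: "word \<Rightarrow> nat" where
  "least_period w = (LEAST p. is_period w p)"

definition is_run :: "word \<Rightarrow> nat \<Rightarrow> nat \<Rightarrow> bool" where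
  "is_run w i j \<longleftrightarrow> 1 \<le> i \<and> i < j \<and> j \<le> length w \<and>
     (let p = least_period (fac w i j) in
        j - i + 1 \<ge> 2 * p \<and>
        (i = 1 \<or> letter w (i - 1) \<noteq> letter w (i - 1 + p)) \<and>
        (j = length w \<or> letter w (j + 1) \<noteq> letter w (j + 1 - p)))"

text \<open>Lexicographic order induced by the letter order in which c is the smallest letter;
  proper prefixes are smaller.\<close>
definition lex_less :: "bool \<Rightarrow> word \<Rightarrow> word \<Rightarrow> bool" where
  "lex_less c x y \<longleftrightarrow>
     (\<exists>u. u \<noteq> [] \<and> y = x @ u) \<or>
     (\<exists>u v v'. x = u @ c # v \<and> y = u @ (\<not> c) # v')"

definition lyndon :: "bool \<Rightarrow> word \<Rightarrow> bool" where
  "lyndon c x \<longleftrightarrow> x \<noteq> [] \<and>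
     (\<forall>y z. y \<noteq> [] \<longrightarrow> z \<noteq> [] \<longrightarrow> x = y @ z \<longrightarrow> x \<noteq> z @ y \<and> lex_less c x (z @ y))"

definition cw :: "word \<Rightarrow> nat \<Rightarrow> bool" where
  "cw w i = (\<not> letter w (i - 1))"

definition Lw :: "word \<Rightarrow> nat \<Rightarrow> nat" where
  "Lw w i = Max {j. i \<le> j \<and> j \<le> length w \<and> lyndon (cw w i) (fac w i j)}"

definition Dw :: "word \<Rightarrow> nat \<Rightarrow> nat" where
  "Dw w i = Lw w i - i + 1"

definition Sw :: "word \<Rightarrow> nat \<Rightarrow> nat" where
  "Sw w i = (LEAST j. 1 \<le> j \<and> is_period (fac w j (Lw w i)) (Dw w i))"

definition Ew :: "word \<Rightarrow> nat \<Rightarrow> nat" where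
  "Ew w i = Max {j. i \<le> j \<and> j \<le> length w \<and> is_period (fac w i j) (Dw w i)}"

definition rw :: "word \<Rightarrow> nat \<Rightarrow> nat \<Rightarrow> bool \<Rightarrow> enat" where
  "rw w s e c =
     (let A = {i. 1 < i \<and> i \<le> length w \<and> Sw w i = s \<and> Ew w i = e \<and> lyndon c (fac w i (Lw w i))}
      in if A = {} then \<infinity> else enat (Min A))"

definition fw :: "word \<Rightarrow> nat \<Rightarrow> nat \<Rightarrow> bool" where
  "fw w s e = (if least_period (fac w s e) = 1 \<or> rw w s e False \<ge> rw w s e True then False else True)"

definition lost :: "word \<Rightarrow> nat \<Rightarrow> bool" where
  "lost w i \<longleftrightarrow> 1 < i \<and> i \<le> length w \<and>
     ((Ew w i < length w \<and> Sw w i > 1 \<and> \<not> is_run w (Sw w i) (Ew w i)) \<or>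
      (Ew w i < length w \<and> is_run w (Sw w i) (Ew w i) \<and> i + Dw w i \<le> Ew w i) \<or>
      (Ew w i = length w \<and> is_run w (Sw w i) (Ew w i) \<and> i + Dw w i \<le> Ew w i \<and> Sw w i < i \<and>
         lyndon (fw w (Sw w i) (Ew w i)) (fac w i (Lw w i))))"

end

theory Submission
  imports Defs
begin

text \<open>A lost position \<open>i\<close> of \<open>w\<close> whose shifted copy is still lost in \<open>w\<^sub>1 w w\<^sub>2\<close> is mapped to
  itself. Otherwise the Lyndon root \<open>w[i..L(i)]\<close> must lie in a run reaching the end of \<open>w\<close>, and
  the choice of \<open>f(r)\<close> provides an earlier root \<open>w[j..j+D-1]\<close> of the opposite order with
  \<open>j < i < j + D\<close> that is not lost in \<open>w\<close>; once the run is prolonged by \<open>w\<^sub>2\<close> (or has its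
  order decided differently), \<open>j\<close> becomes lost in \<open>w\<^sub>1 w w\<^sub>2\<close>. Two Lyndon conjugates of the same
  order cannot start less than one period apart, so \<open>i \<mapsto> j\<close> is injective, and sorting the
  image of this injective, non-increasing map yields the monotone \<open>\<mu>\<close>.\<close>

text \<open>\<open>v\<close> is \<open><\<^sub>c\<close>-smaller than its rotation by \<open>q\<close>, as witnessed by the first position where \<open>v\<close>
  differs from its own shift by \<open>q\<close>.\<close>
definition shift_mismatch :: "bool \<Rightarrow> bool list \<Rightarrow> nat \<Rightarrow> bool" where
  "shift_mismatch c v q \<longleftrightarrow>
     (\<exists>t. t + q < length v \<and> (\<forall>s<t. v!(s+q) = v!s) \<and> v!t = c \<and> v!(t+q) = (\<not>c))"

lemma lex_less_same_length:
  assumes "lex_less c x y" "length x = length y"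
  shows "\<exists>t<length x. (\<forall>s<t. x!s = y!s) \<and> x!t = c \<and> y!t = (\<not>c)"
proof -
  from assms(1) consider (prefix) u where "u \<noteq> []" "y = x @ u"
    | (differ) u v v' where "x = u @ c # v" "y = u @ (\<not>c) # v'"
    unfolding lex_less_def by blast
  then show ?thesis
  proof cases
    case prefix then show ?thesis using assms(2) by simp
  next
    case differ then show ?thesis by (intro exI[of _ "length u"]) (auto simp: nth_append)
  qed
qed

lemma lex_less_nthI:
  assumes "t < length x" "t < length y" "\<forall>s<t. x!s = y!s" "x!t = c" "y!t = (\<not>c)"
  shows "lex_less c x y"
proof -
  have tx: "take t x = take t y" using assms(1,2,3) by (intro nth_equalityI) auto
  have "x = take t x @ c # drop (Suc t) x" using id_take_nth_drop[OF assms(1)] assms(4) by simp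
  moreover have "y = take t x @ (\<not>c) # drop (Suc t) y"
    using id_take_nth_drop[OF assms(2)] assms(5) tx by simp
  ultimately show ?thesis unfolding lex_less_def by blast
qed

text \<open>A Lyndon word is unbordered: compare it with the rotation by its border and with the
  rotation by the complementary length.\<close>
lemma lyndon_not_periodic:
  assumes L: "lyndon c v" and q: "0 < q" "q < length v"
  shows "\<exists>s. s + q < length v \<and> v!(s+q) \<noteq> v!s"
proof (rule ccontr)
  assume "\<not> ?thesis"
  then have per: "\<And>s. s + q < length v \<Longrightarrow> v!(s+q) = v!s" by blast
  define y where "y = take q v"
  define z where "z = drop q v"
  define p where "p = length v - q"
  define t' where "t' = drop p v"
  have ly: "length y = q" and lz: "length z = p" and lt': "length t' = q"
    using q by (simp_all add: y_def z_def t'_def p_def)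
  have v: "v = y @ z" by (simp add: y_def z_def)
  have zt: "z = take p v"
    using per unfolding z_def p_def by (intro nth_equalityI) (auto simp: add.commute)
  have v2: "v = z @ t'" using zt t'_def by simp
  have nonempty: "y \<noteq> []" "z \<noteq> []" "t' \<noteq> []" using q ly lz lt' p_def by auto
  from L nonempty v have lt1: "lex_less c v (z @ y)" unfolding lyndon_def by blast
  from L nonempty v2 have lt2: "lex_less c v (t' @ z)" unfolding lyndon_def by blast
  have zy1: "\<And>s. s < p \<Longrightarrow> (z@y)!s = v!(s+q)"
    using lz by (simp add: nth_append z_def add.commute)
  have zy2: "\<And>s. p \<le> s \<Longrightarrow> s < length v \<Longrightarrow> (z@y)!s = v!(s - p)"
    using lz q by (simp add: nth_append y_def p_def)
  have tz: "\<And>s. q \<le> s \<Longrightarrow> s < length v \<Longrightarrow> (t'@z)!s = v!s"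
    using lt' by (simp add: nth_append z_def)
  obtain t1 where t1: "t1 < length v" "\<forall>s<t1. v!s = (z@y)!s" "v!t1 = c" "(z@y)!t1 = (\<not>c)"
    using lex_less_same_length[OF lt1] lz ly p_def q by auto
  obtain t2 where t2: "t2 < length v" "\<forall>s<t2. v!s = (t'@z)!s" "v!t2 = c" "(t'@z)!t2 = (\<not>c)"
    using lex_less_same_length[OF lt2] lz lt' p_def q by auto
  have t2q: "t2 < q" using t2 tz[of t2] by (cases "q \<le> t2") auto
  have t1p: "p \<le> t1"
  proof (rule ccontr)
    assume "\<not> p \<le> t1"
    then have "(z@y)!t1 = v!t1" using zy1 per[of t1] p_def by auto
    then show False using t1 by auto
  qed
  define a where "a = t1 - p"
  have aq: "a < q" using t1 p_def a_def q by auto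
  have A1: "t'!s = v!s" if "s < a" for s
  proof -
    have "t'!s = v!(p+s)" using t'_def p_def aq that by simp
    also have "\<dots> = (z@y)!(p+s)" using t1 that a_def by auto
    also have "\<dots> = v!s" using zy2[of "p+s"] p_def that aq q by auto
    finally show ?thesis .
  qed
  have A2: "t'!a = c" using t1 a_def t'_def p_def t1p aq by simp
  have A3: "v!a = (\<not>c)" using t1 zy2[of t1] a_def p_def t1p by auto
  have B1: "\<And>s. s < t2 \<Longrightarrow> t'!s = v!s" using t2 t2q lt' by (auto simp: nth_append)
  have B2: "t'!t2 = (\<not>c)" using t2 t2q lt' by (simp add: nth_append)
  consider "a < t2" | "t2 < a" | "t2 = a" by linarith
  then show False
    by cases (use B1[of a] A1[of t2] A2 A3 B2 t2 in auto)
qed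

lemma lyndon_shift_mismatch:
  assumes L: "lyndon c v" and q: "0 < q" "q < length v"
  shows "shift_mismatch c v q"
proof -
  define y where "y = take q v"
  define z where "z = drop q v"
  have v: "v = y @ z" by (simp add: y_def z_def)
  have lz: "length z = length v - q" by (simp add: z_def)
  have nonempty: "y \<noteq> []" "z \<noteq> []" using q lz by (auto simp: y_def)
  from L nonempty v have lt: "lex_less c v (z @ y)" unfolding lyndon_def by blast
  have zy: "\<And>s. s < length v - q \<Longrightarrow> (z@y)!s = v!(s+q)"
    using lz by (simp add: nth_append z_def add.commute)
  obtain t1 where t1: "t1 < length v" "\<forall>s<t1. v!s = (z@y)!s" "v!t1 = c" "(z@y)!t1 = (\<not>c)"
    using lex_less_same_length[OF lt] lz q by (auto simp: y_def)
  define t where "t = (LEAST s. s + q < length v \<and> v!(s+q) \<noteq> v!s)"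
  have t: "t + q < length v" "v!(t+q) \<noteq> v!t"
    using LeastI_ex[OF lyndon_not_periodic[OF assms]] unfolding t_def by blast+
  have below_t: "v!(s+q) = v!s" if "s < t" for s
    using not_less_Least[of s "\<lambda>s. s + q < length v \<and> v!(s+q) \<noteq> v!s"] that t(1)
    unfolding t_def by auto
  have "t1 = t"
  proof (rule ccontr)
    assume "t1 \<noteq> t"
    then consider "t1 < t" | "t < t1" by linarith
    then show False
    proof cases
      case 1
      then have "(z@y)!t1 = v!t1" using zy t(1) below_t by auto
      then show False using t1 by auto
    next
      case 2
      then have "v!t = v!(t+q)" using t1 zy t(1) by auto
      then show False using t by auto
    qed
  qed
  then show ?thesis unfolding shift_mismatch_def using t below_t t1 zy by (intro exI[of _ t]) auto
qed

lemma shift_mismatch_lyndon: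
  assumes "v \<noteq> []" "\<And>q. 0 < q \<Longrightarrow> q < length v \<Longrightarrow> shift_mismatch c v q"
  shows "lyndon c v"
  unfolding lyndon_def
proof (intro conjI allI impI)
  show "v \<noteq> []" by fact
  fix y z assume yz: "y \<noteq> []" "z \<noteq> []" "v = y @ z"
  define q where "q = length y"
  have q: "0 < q" "q < length v" using yz q_def by auto
  obtain t where t: "t + q < length v" "\<forall>s<t. v!(s+q) = v!s" "v!t = c" "v!(t+q) = (\<not>c)"
    using assms(2)[OF q] unfolding shift_mismatch_def by blast
  have zy: "\<And>s. s < length z \<Longrightarrow> (z@y)!s = v!(s+q)"
    using yz q_def by (simp add: nth_append add.commute)
  have tz: "t < length z" using t yz q_def by simp
  show "lex_less c v (z@y)"
    using lex_less_nthI[of t v "z@y" c] t tz zy by auto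
  show "v \<noteq> z@y" using zy[OF tz] t by auto
qed

lemma lyndon_iff_shift_mismatch:
  "lyndon c v \<longleftrightarrow> v \<noteq> [] \<and> (\<forall>q. 0 < q \<longrightarrow> q < length v \<longrightarrow> shift_mismatch c v q)"
  using lyndon_shift_mismatch shift_mismatch_lyndon lyndon_def by blast

definition periodic_on :: "word \<Rightarrow> nat \<Rightarrow> nat \<Rightarrow> nat \<Rightarrow> bool" where
  "periodic_on w D x y \<longleftrightarrow> (\<forall>k. x \<le> k \<longrightarrow> k + D \<le> y \<longrightarrow> letter w k = letter w (k + D))"

definition shift_mismatch_in :: "word \<Rightarrow> bool \<Rightarrow> nat \<Rightarrow> nat \<Rightarrow> nat \<Rightarrow> bool" where
  "shift_mismatch_in w c i j q \<longleftrightarrow>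
     (\<exists>k. i \<le> k \<and> k + q \<le> j \<and> (\<forall>x. i \<le> x \<longrightarrow> x < k \<longrightarrow> letter w (x+q) = letter w x)
      \<and> letter w k = c \<and> letter w (k+q) = (\<not>c))"


abbreviation lyndon_fac :: "word \<Rightarrow> bool \<Rightarrow> nat \<Rightarrow> nat \<Rightarrow> bool" where
  "lyndon_fac w c i j \<equiv> lyndon c (fac w i j)"

lemma length_fac: "1 \<le> i \<Longrightarrow> j \<le> length w \<Longrightarrow> length (fac w i j) = Suc j - i"
  unfolding fac_def by auto

lemma nth_fac: "1 \<le> i \<Longrightarrow> j \<le> length w \<Longrightarrow> s < Suc j - i \<Longrightarrow> fac w i j ! s = letter w (i + s)"
  unfolding fac_def letter_def by (auto simp: add.commute)

lemma shift_mismatch_fac_iff: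
  assumes "1 \<le> i" "j \<le> length w"
  shows "shift_mismatch c (fac w i j) q \<longleftrightarrow> shift_mismatch_in w c i j q"
proof -
  have len: "length (fac w i j) = Suc j - i" using length_fac assms by auto
  have nth: "\<And>s. s < Suc j - i \<Longrightarrow> fac w i j ! s = letter w (i + s)" using nth_fac assms by auto
  show ?thesis
  proof
    assume "shift_mismatch c (fac w i j) q"
    then obtain t where t: "t + q < Suc j - i" "\<forall>s<t. fac w i j!(s+q) = fac w i j!s"
       "fac w i j!t = c" "fac w i j!(t+q) = (\<not>c)" unfolding shift_mismatch_def len by blast
    show "shift_mismatch_in w c i j q" unfolding shift_mismatch_in_def
    proof (intro exI[of _ "i+t"] conjI allI impI)
      show "i \<le> i + t" "i + t + q \<le> j" using t(1) by linarith+
      fix x assume x: "i \<le> x" "x < i + t"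
      then have "x - i < t" by linarith
      then have "fac w i j!((x - i)+q) = fac w i j!(x-i)" using t(2) by blast
      then show "letter w (x + q) = letter w x" using nth[of "x-i+q"] nth[of "x-i"] x t(1) by auto
    next
      show "letter w (i + t) = c" using t(3) nth[of t] t(1) by auto
      show "letter w (i + t + q) = (\<not>c)" using t(4) nth[of "t+q"] t(1) by (auto simp: add.assoc)
    qed
  next
    assume "shift_mismatch_in w c i j q"
    then obtain k where k: "i \<le> k" "k + q \<le> j" "\<forall>x. i \<le> x \<longrightarrow> x < k \<longrightarrow> letter w (x+q) = letter w x"
      "letter w k = c" "letter w (k+q) = (\<not>c)" unfolding shift_mismatch_in_def by blast
    show "shift_mismatch c (fac w i j) q" unfolding shift_mismatch_def len
    proof (intro exI[of _ "k-i"] conjI allI impI)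
      show "k - i + q < Suc j - i" using k by linarith
      fix s assume s: "s < k - i"
      have "letter w (i+s+q) = letter w (i+s)" using k(3) s by auto
      then show "fac w i j ! (s + q) = fac w i j ! s"
        using nth[of "s+q"] nth[of s] s k by (auto simp: add.assoc)
    next
      show "fac w i j ! (k - i) = c" "fac w i j ! (k - i + q) = (\<not>c)"
        using nth[of "k-i"] nth[of "k-i+q"] k by auto
    qed
  qed
qed

lemma lyndon_fac_iff:
  assumes "1 \<le> i" "i \<le> j" "j \<le> length w"
  shows "lyndon_fac w c i j \<longleftrightarrow> (\<forall>q. 0 < q \<longrightarrow> q \<le> j - i \<longrightarrow> shift_mismatch_in w c i j q)"
proof -
  have len: "length (fac w i j) = Suc j - i" using length_fac assms by auto
  then have "fac w i j \<noteq> []" using assms by auto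
  with len show ?thesis
    unfolding lyndon_iff_shift_mismatch using shift_mismatch_fac_iff[OF assms(1,3)] by auto
qed

lemma is_period_fac_iff:
  assumes "1 \<le> x" "y \<le> length w"
  shows "is_period (fac w x y) D \<longleftrightarrow> 1 \<le> D \<and> periodic_on w D x y"
proof -
  have len: "length (fac w x y) = Suc y - x" using length_fac assms by auto
  have lt: "letter (fac w x y) i = letter w (x + i - 1)" if "1 \<le> i" "i \<le> Suc y - x" for i
    unfolding letter_def[of "fac w x y"]
      using nth_fac[OF assms, of "i - 1"] that by (simp add: letter_def)
  show ?thesis
  proof
    assume P: "is_period (fac w x y) D"
    show "1 \<le> D \<and> periodic_on w D x y" unfolding periodic_on_def
    proof (intro conjI allI impI)
      show "1 \<le> D" using P is_period_def by auto
      fix k assume k: "x \<le> k" "k + D \<le> y"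
      have pre: "1 \<le> k - x + 1 \<and> (k - x + 1) + D \<le> length (fac w x y)" using k len by auto
      have "letter (fac w x y) ((k - x + 1) + D) = letter (fac w x y) (k - x + 1)"
        using P pre unfolding is_period_def by blast
      then show "letter w k = letter w (k + D)"
        using lt[of "k-x+1+D"] lt[of "k-x+1"] k assms by auto
    qed
  next
    assume P: "1 \<le> D \<and> periodic_on w D x y"
    show "is_period (fac w x y) D" unfolding is_period_def
    proof (intro conjI allI impI)
      show "1 \<le> D" using P by auto
      fix i assume i: "1 \<le> i \<and> i + D \<le> length (fac w x y)"
      have "letter w (x + i - 1) = letter w (x + i - 1 + D)"
        using P i len unfolding periodic_on_def by auto
      moreover have "x + (i + D) - 1 = x + i - 1 + D" using i by simp
      moreover have "letter (fac w x y) (i + D) = letter w (x + (i+D) - 1)"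
        using lt[of "i+D"] i len by auto
      moreover have "letter (fac w x y) i = letter w (x + i - 1)" using lt[of i] i len by auto
      ultimately show "letter (fac w x y) (i + D) = letter (fac w x y) i" by simp
    qed
  qed
qed

lemma periodic_on_mono:
  assumes "periodic_on w D a b" "a \<le> a'" "b' \<le> b"
  shows "periodic_on w D a' b'"
  using assms unfolding periodic_on_def by auto

lemma periodic_on_union:
  assumes ab: "periodic_on w D a b" and cd: "periodic_on w D c d" and "a \<le> c" "c + D \<le> b + 1"
  shows "periodic_on w D a d"
  unfolding periodic_on_def
proof (intro allI impI)
  fix k assume k: "a \<le> k" "k + D \<le> d"
  show "letter w k = letter w (k + D)"
  proof (cases "k + D \<le> b")
    case True then show ?thesis using ab k unfolding periodic_on_def by auto
  next
    case False then have "c \<le> k" using assms by linarith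
    then show ?thesis using cd k unfolding periodic_on_def by auto
  qed
qed

lemma periodic_on_mult:
  assumes "periodic_on w D x y" "x \<le> a" "a + m * D \<le> y"
  shows "letter w a = letter w (a + m * D)"
  using assms(3)
proof (induction m)
  case 0 then show ?case by simp
next
  case (Suc m)
  then have "letter w a = letter w (a + m * D)" by auto
  also have "\<dots> = letter w (a + m * D + D)"
    using assms(1,2) Suc.prems unfolding periodic_on_def by auto
  finally show ?case by (simp add: algebra_simps)
qed

lemma periodic_on_dvd:
  assumes "periodic_on w D x y" "x \<le> a" "a \<le> b" "b \<le> y" "D dvd (b - a)"
  shows "letter w a = letter w b"
proof -
  obtain m where "b - a = D * m" using assms(5) by (auto elim: dvdE)
  then have "b = a + m * D" using assms(3) by (simp add: mult.commute)
  then show ?thesis using periodic_on_mult[OF assms(1,2), of m] assms(4) by simp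
qed

lemma lyndon_fac_single:
  assumes "1 \<le> i" "i \<le> length w"
  shows "lyndon_fac w c i i"
  using lyndon_fac_iff[of i i w c] assms by auto

lemma lyndon_fac_not_periodic:
  assumes "1 \<le> i" "i \<le> j" "j \<le> length w" "lyndon_fac w c i j" "0 < q" "q \<le> j - i"
  shows "\<not> periodic_on w q i j"
proof
  assume per: "periodic_on w q i j"
  have "shift_mismatch_in w c i j q" using lyndon_fac_iff assms by blast
  then obtain k where "i \<le> k" "k + q \<le> j" "letter w k = c" "letter w (k+q) = (\<not>c)"
    unfolding shift_mismatch_in_def by blast
  then show False using per unfolding periodic_on_def by force
qed

lemma lyndon_fac_ends:
  assumes "1 \<le> i" "i < j" "j \<le> length w" "lyndon_fac w c i j"
  shows "letter w i = c \<and> letter w j = (\<not>c)"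
proof -
  have "shift_mismatch_in w c i j (j - i)" using lyndon_fac_iff[of i j w c] assms by auto
  then obtain k where "i \<le> k" "k + (j - i) \<le> j" "letter w k = c" "letter w (k+(j-i)) = (\<not>c)"
    unfolding shift_mismatch_in_def by blast
  moreover from this have "k = i" by linarith
  ultimately show ?thesis using assms by auto
qed

lemma lyndon_fac_not_both:
  assumes "1 \<le> i" "i < j" "j \<le> length w" "lyndon_fac w c i j" "lyndon_fac w (\<not>c) i j"
  shows False
  using lyndon_fac_ends[of i j w c] lyndon_fac_ends[of i j w "\<not>c"] assms by auto

lemma lyndon_fac_order_unique:
  assumes "1 \<le> i" "i < j" "j \<le> length w" "lyndon_fac w c i j" "lyndon_fac w c' i j"
  shows "c = c'"
  using lyndon_fac_not_both[of i j w c] assms by (cases c; cases c') auto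

lemma fac_eqI:
  assumes "1 \<le> i" "j \<le> length w" "1 \<le> i'" "i' + (j - i) \<le> length w'" "i \<le> j"
    "\<And>s. s \<le> j - i \<Longrightarrow> letter w (i+s) = letter w' (i'+s)"
  shows "fac w i j = fac w' i' (i' + (j - i))"
proof (rule nth_equalityI)
  show "length (fac w i j) = length (fac w' i' (i' + (j - i)))"
    using length_fac assms by (metis Suc_diff_le add_diff_cancel_left' le_add1 le_add_diff_inverse)
  fix s assume "s < length (fac w i j)"
  then have s: "s < Suc j - i" using length_fac assms by auto
  have "fac w i j ! s = letter w (i + s)" using nth_fac assms s by auto
  also have "\<dots> = letter w' (i' + s)" using assms(6) s by auto
  also have "\<dots> = fac w' i' (i' + (j - i)) ! s"
    using nth_fac[of i' "i' + (j - i)" w' s] assms s by auto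
  finally show "fac w i j ! s = fac w' i' (i' + (j - i)) ! s" .
qed

definition lyndon_ends :: "word \<Rightarrow> nat \<Rightarrow> nat set" where
  "lyndon_ends w i = {j. i \<le> j \<and> j \<le> length w \<and> lyndon (cw w i) (fac w i j)}"

lemma Lw_eq_Max_lyndon_ends: "Lw w i = Max (lyndon_ends w i)"
  unfolding Lw_def lyndon_ends_def by simp

lemma finite_lyndon_ends: "finite (lyndon_ends w i)"
  unfolding lyndon_ends_def by (rule finite_subset[of _ "{..length w}"]) auto

lemma Lw_spec:
  assumes "1 \<le> i" "i \<le> length w"
  shows "i \<le> Lw w i" "Lw w i \<le> length w" "lyndon_fac w (cw w i) i (Lw w i)"
proof -
  have "i \<in> lyndon_ends w i" unfolding lyndon_ends_def using lyndon_fac_single assms by auto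
  then have ne: "lyndon_ends w i \<noteq> {}" by auto
  have "Lw w i \<in> lyndon_ends w i"
    unfolding Lw_eq_Max_lyndon_ends using Max_in[OF finite_lyndon_ends ne] .
  then show "i \<le> Lw w i" "Lw w i \<le> length w" "lyndon_fac w (cw w i) i (Lw w i)"
    unfolding lyndon_ends_def by auto
qed

lemma Lw_maximal:
  assumes "1 \<le> i" "i \<le> length w" "Lw w i < j" "j \<le> length w"
  shows "\<not> lyndon_fac w (cw w i) i j"
proof
  assume "lyndon_fac w (cw w i) i j"
  then have "j \<in> lyndon_ends w i"
    unfolding lyndon_ends_def using assms Lw_spec(1)[OF assms(1,2)] by auto
  then have "j \<le> Lw w i" unfolding Lw_eq_Max_lyndon_ends using Max_ge[OF finite_lyndon_ends] by auto
  then show False using assms by auto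
qed

lemma Lw_eqI:
  assumes "1 \<le> i" "i \<le> m" "m \<le> length w" "lyndon_fac w (cw w i) i m"
    "\<And>j. m < j \<Longrightarrow> j \<le> length w \<Longrightarrow> \<not> lyndon_fac w (cw w i) i j"
  shows "Lw w i = m"
  unfolding Lw_eq_Max_lyndon_ends
proof (rule Max_eqI[OF finite_lyndon_ends])
  show "m \<in> lyndon_ends w i" unfolding lyndon_ends_def using assms by auto
  fix y assume "y \<in> lyndon_ends w i"
  then have "y \<le> length w" "lyndon_fac w (cw w i) i y" unfolding lyndon_ends_def by auto
  then show "y \<le> m" using assms(5)[of y] by (meson not_le)
qed

lemma Dw_ge_1: "Dw w i \<ge> 1" unfolding Dw_def by simp

lemma Lw_eq:
  assumes "1 \<le> i" "i \<le> length w"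
  shows "Lw w i = i + Dw w i - 1"
  using Lw_spec(1)[OF assms] unfolding Dw_def by auto

lemma periodic_on_root: "periodic_on w (Dw w i) i (Lw w i)"
  unfolding periodic_on_def Dw_def by auto

lemma Sw_candidate_iff:
  assumes "1 \<le> i" "i \<le> length w"
  shows "(1 \<le> j \<and> is_period (fac w j (Lw w i)) (Dw w i)) \<longleftrightarrow>
    1 \<le> j \<and> periodic_on w (Dw w i) j (Lw w i)"
  using is_period_fac_iff[of j "Lw w i" w "Dw w i"] Lw_spec[OF assms] Dw_ge_1 by auto

lemma Sw_spec:
  assumes "1 \<le> i" "i \<le> length w"
  shows "1 \<le> Sw w i" "Sw w i \<le> i" "periodic_on w (Dw w i) (Sw w i) (Lw w i)"
    "Sw w i = 1 \<or> letter w (Sw w i - 1) \<noteq> letter w (Sw w i - 1 + Dw w i)"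
proof -
  define P where "P j \<longleftrightarrow> 1 \<le> j \<and> is_period (fac w j (Lw w i)) (Dw w i)" for j
  have SP: "Sw w i = (LEAST j. P j)" unfolding Sw_def P_def by simp
  have Pi: "P j \<longleftrightarrow> 1 \<le> j \<and> periodic_on w (Dw w i) j (Lw w i)" for j
    unfolding P_def using Sw_candidate_iff[OF assms] by blast
  have "P i" unfolding Pi using periodic_on_root assms by auto
  then have PS: "P (Sw w i)" unfolding SP by (rule LeastI)
  show "Sw w i \<le> i" unfolding SP using \<open>P i\<close> by (rule Least_le)
  show S1: "1 \<le> Sw w i" and ppS: "periodic_on w (Dw w i) (Sw w i) (Lw w i)"
    using PS unfolding Pi by auto
  show "Sw w i = 1 \<or> letter w (Sw w i - 1) \<noteq> letter w (Sw w i - 1 + Dw w i)"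
  proof (cases "Sw w i = 1")
    case True then show ?thesis by simp
  next
    case False
    then have lt: "Sw w i - 1 < Sw w i" "1 \<le> Sw w i - 1" using S1 by auto
    have "\<not> P (Sw w i - 1)" using not_less_Least[of "Sw w i - 1" P] lt(1) unfolding SP by blast
    then have "\<not> periodic_on w (Dw w i) (Sw w i - 1) (Lw w i)" using Pi lt by auto
    then obtain k where k: "Sw w i - 1 \<le> k" "k + Dw w i \<le> Lw w i"
      "letter w k \<noteq> letter w (k + Dw w i)"
      unfolding periodic_on_def by blast
    have "\<not> Sw w i \<le> k"
    proof
      assume "Sw w i \<le> k"
      then have "letter w k = letter w (k + Dw w i)"
        using ppS k(2) unfolding periodic_on_def by blast
      then show False using k(3) by simp
    qed
    then have "k = Sw w i - 1" using k by linarith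
    then show ?thesis using k by simp
  qed
qed

lemma Sw_le:
  assumes "1 \<le> i" "i \<le> length w" "1 \<le> x" "periodic_on w (Dw w i) x (Lw w i)"
  shows "Sw w i \<le> x"
  unfolding Sw_def using Sw_candidate_iff[OF assms(1,2), of x] assms by (intro Least_le) auto

lemma Sw_eqI:
  assumes "1 \<le> i" "i \<le> length w" "1 \<le> x" "x \<le> i" "periodic_on w (Dw w i) x (Lw w i)"
    "x = 1 \<or> letter w (x - 1) \<noteq> letter w (x - 1 + Dw w i)"
  shows "Sw w i = x"
proof -
  have le: "Sw w i \<le> x" using Sw_le assms by auto
  show ?thesis
  proof (rule ccontr)
    assume "Sw w i \<noteq> x"
    then have lt: "Sw w i < x" using le by auto
    then have x1: "x \<noteq> 1" using Sw_spec(1)[OF assms(1,2)] by auto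
    have "Sw w i \<le> x - 1" "x - 1 + Dw w i \<le> Lw w i" using lt assms Lw_eq[OF assms(1,2)] by auto
    then have "letter w (x - 1) = letter w (x - 1 + Dw w i)"
      using Sw_spec(3)[OF assms(1,2)] unfolding periodic_on_def by blast
    then show False using assms(6) x1 by auto
  qed
qed

definition period_ends :: "word \<Rightarrow> nat \<Rightarrow> nat set" where
  "period_ends w i = {j. i \<le> j \<and> j \<le> length w \<and> is_period (fac w i j) (Dw w i)}"

lemma Ew_eq_Max_period_ends: "Ew w i = Max (period_ends w i)"
  unfolding Ew_def period_ends_def by simp

lemma finite_period_ends: "finite (period_ends w i)"
  unfolding period_ends_def by (rule finite_subset[of _ "{..length w}"]) auto

lemma mem_period_ends_iff:
  assumes "1 \<le> i"
  shows "j \<in> period_ends w i \<longleftrightarrow> i \<le> j \<and> j \<le> length w \<and> periodic_on w (Dw w i) i j"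
  unfolding period_ends_def using is_period_fac_iff[of i j w "Dw w i"] assms Dw_ge_1 by auto

lemma Ew_spec:
  assumes "1 \<le> i" "i \<le> length w"
  shows "Lw w i \<le> Ew w i" "Ew w i \<le> length w" "periodic_on w (Dw w i) i (Ew w i)"
    "Ew w i = length w \<or> letter w (Ew w i + 1) \<noteq> letter w (Ew w i + 1 - Dw w i)"
proof -
  have L: "Lw w i \<in> period_ends w i" unfolding mem_period_ends_iff[OF assms(1)]
    using Lw_spec[OF assms] periodic_on_root by auto
  then have ne: "period_ends w i \<noteq> {}" by auto
  have EM: "Ew w i \<in> period_ends w i" unfolding Ew_eq_Max_period_ends
    using Max_in[OF finite_period_ends ne] .
  show "Lw w i \<le> Ew w i" unfolding Ew_eq_Max_period_ends using Max_ge[OF finite_period_ends L] .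
  show "Ew w i \<le> length w" "periodic_on w (Dw w i) i (Ew w i)"
    using EM mem_period_ends_iff[OF assms(1)] by auto
  show "Ew w i = length w \<or> letter w (Ew w i + 1) \<noteq> letter w (Ew w i + 1 - Dw w i)"
  proof (cases "Ew w i = length w")
    case True then show ?thesis by simp
  next
    case False
    assume ne: "Ew w i \<noteq> length w"
    have "Ew w i + 1 \<notin> period_ends w i"
      using Max_ge[OF finite_period_ends, of "Ew w i + 1" w i] unfolding Ew_eq_Max_period_ends by auto
    then have "\<not> periodic_on w (Dw w i) i (Ew w i + 1)"
      using mem_period_ends_iff[OF assms(1)] EM ne by auto
    then obtain k where k: "i \<le> k" "k + Dw w i \<le> Ew w i + 1" "letter w k \<noteq> letter w (k + Dw w i)"
      unfolding periodic_on_def by blast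
    have "\<not> k + Dw w i \<le> Ew w i"
      using EM mem_period_ends_iff[OF assms(1)] k unfolding periodic_on_def by blast
    then have k1: "k + Dw w i = Ew w i + 1" using k by linarith
    then have k2: "Ew w i + 1 - Dw w i = k" by simp
    show ?thesis unfolding k2 k1[symmetric] using k(3) by simp
  qed
qed

lemma Ew_ge:
  assumes "1 \<le> i" "i \<le> y" "y \<le> length w" "periodic_on w (Dw w i) i y"
  shows "y \<le> Ew w i"
  unfolding Ew_eq_Max_period_ends
    using Max_ge[OF finite_period_ends] mem_period_ends_iff[OF assms(1)] assms by auto

lemma Ew_eqI:
  assumes "1 \<le> i" "i \<le> length w" "Lw w i \<le> y" "y \<le> length w" "periodic_on w (Dw w i) i y"
    "y = length w \<or> letter w (y + 1) \<noteq> letter w (y + 1 - Dw w i)"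
  shows "Ew w i = y"
proof (rule ccontr)
  assume "Ew w i \<noteq> y"
  moreover have "y \<le> Ew w i" using Ew_ge assms Lw_spec(1)[OF assms(1,2)] by auto
  ultimately have lt: "y < Ew w i" by auto
  then have yn: "y \<noteq> length w" using Ew_spec(2)[OF assms(1,2)] by auto
  have "i \<le> y + 1 - Dw w i" "y + 1 - Dw w i + Dw w i \<le> Ew w i"
    using lt assms(3) Lw_eq[OF assms(1,2)] by auto
  then have "letter w (y + 1 - Dw w i) = letter w (y + 1 - Dw w i + Dw w i)"
    using Ew_spec(3)[OF assms(1,2)] unfolding periodic_on_def by blast
  moreover have "y + 1 - Dw w i + Dw w i = y + 1" using assms(3) Lw_eq[OF assms(1,2)] by auto
  ultimately show False using assms(6) yn by auto
qed

lemma periodic_on_run: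
  assumes "1 \<le> i" "i \<le> length w"
  shows "periodic_on w (Dw w i) (Sw w i) (Ew w i)"
  by (rule periodic_on_union[OF Sw_spec(3)[OF assms] Ew_spec(3)[OF assms] Sw_spec(2)[OF assms]])
     (use Lw_eq[OF assms] in simp)

lemma least_period_run:
  assumes "1 \<le> i" "i \<le> length w"
  shows "least_period (fac w (Sw w i) (Ew w i)) = Dw w i"
proof -
  let ?f = "fac w (Sw w i) (Ew w i)"
  have per: "is_period ?f (Dw w i)" using is_period_fac_iff[of "Sw w i" "Ew w i" w "Dw w i"]
    Sw_spec[OF assms] Ew_spec[OF assms] periodic_on_run[OF assms] Dw_ge_1 by auto
  have le: "least_period ?f \<le> Dw w i" unfolding least_period_def using per by (rule Least_le)
  have lp: "is_period ?f (least_period ?f)" unfolding least_period_def using per by (rule LeastI)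
  then have lp1: "1 \<le> least_period ?f" "periodic_on w (least_period ?f) (Sw w i) (Ew w i)"
    using is_period_fac_iff[of "Sw w i" "Ew w i" w] Sw_spec[OF assms] Ew_spec[OF assms] by auto
  show ?thesis
  proof (rule ccontr)
    assume "least_period ?f \<noteq> Dw w i"
    then have lt: "least_period ?f < Dw w i" using le by auto
    have "periodic_on w (least_period ?f) i (Lw w i)"
      using periodic_on_mono[OF lp1(2)] Sw_spec(2)[OF assms] Ew_spec(1)[OF assms] by auto
    moreover have "\<not> periodic_on w (least_period ?f) i (Lw w i)"
      by (rule lyndon_fac_not_periodic[OF assms(1) Lw_spec(1,2,3)[OF assms]])
         (use lt lp1 Lw_eq[OF assms] in auto)
    ultimately show False by simp
  qed
qed

lemma is_run_iff:
  assumes "1 \<le> i" "i \<le> length w"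
  shows "is_run w (Sw w i) (Ew w i) \<longleftrightarrow> 2 * Dw w i \<le> Ew w i - Sw w i + 1"
proof -
  have S: "1 \<le> Sw w i" "Sw w i \<le> i"
    "Sw w i = 1 \<or> letter w (Sw w i - 1) \<noteq> letter w (Sw w i - 1 + Dw w i)"
    using Sw_spec[OF assms] by auto
  have E: "Lw w i \<le> Ew w i" "Ew w i \<le> length w"
    "Ew w i = length w \<or> letter w (Ew w i + 1) \<noteq> letter w (Ew w i + 1 - Dw w i)"
    using Ew_spec[OF assms] by auto
  have L: "i \<le> Lw w i" using Lw_spec[OF assms] by auto
  have D1: "1 \<le> Dw w i" by (rule Dw_ge_1)
  show ?thesis
    unfolding is_run_def Let_def least_period_run[OF assms]
    using S E L D1 by auto
qed

lemma Lw_eq_of_periodic_root: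
  assumes "1 \<le> j" "j + D - 1 \<le> e" "e \<le> length w" "1 \<le> D"
    "lyndon_fac w (cw w j) j (j + D - 1)" "periodic_on w D j e"
    "e = length w \<or> (letter w (e+1) = cw w j \<and> letter w (e + 1 - D) \<noteq> cw w j)"
  shows "Lw w j = j + D - 1"
proof (rule Lw_eqI)
  show "1 \<le> j" "j \<le> j + D - 1" "j + D - 1 \<le> length w" "lyndon_fac w (cw w j) j (j + D - 1)"
    using assms by auto
  fix m assume m: "j + D - 1 < m" "m \<le> length w"
  show "\<not> lyndon_fac w (cw w j) j m"
  proof
    assume "lyndon_fac w (cw w j) j m"
    then have "shift_mismatch_in w (cw w j) j m D"
      using lyndon_fac_iff[of j m w "cw w j"] m assms by auto
    then obtain k where k: "j \<le> k" "k + D \<le> m" "\<forall>x. j \<le> x \<longrightarrow> x < k \<longrightarrow> letter w (x+D) = letter w x"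
      "letter w k = cw w j" "letter w (k+D) = (\<not> cw w j)" unfolding shift_mismatch_in_def by blast
    show False
    proof (cases "k + D \<le> e")
      case True
      then have "letter w k = letter w (k + D)"
        using assms(6) k(1) unfolding periodic_on_def by blast
      then show False using k by simp
    next
      case False
      then have en: "e \<noteq> length w" using k m by auto
      then have br: "letter w (e+1) = cw w j" "letter w (e + 1 - D) \<noteq> cw w j" using assms(7) by auto
      have "k = e + 1 - D"
      proof (rule ccontr)
        assume "k \<noteq> e + 1 - D"
        then have "e + 1 - D < k" using False by linarith
        moreover have "j \<le> e + 1 - D" using assms by linarith
        ultimately have "letter w (e + 1 - D + D) = letter w (e + 1 - D)" using k(3) by blast
        moreover have "e + 1 - D + D = e + 1" using assms by linarith
        ultimately show False using br by simp
      qed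
      moreover have "e + 1 - D + D = e + 1" using assms by linarith
      ultimately show False using k(5) br by simp
    qed
  qed
qed

lemma same_run_of_root:
  assumes "1 \<le> i" "i \<le> length w" "1 \<le> j" "j \<le> length w" "Sw w i \<le> j"
    "Lw w j = j + Dw w i - 1" "j + Dw w i - 1 \<le> Ew w i"
  shows "Dw w j = Dw w i" "Sw w j = Sw w i" "Ew w j = Ew w i"
proof -
  show D: "Dw w j = Dw w i" unfolding Dw_def[of w j] using assms(6) Dw_ge_1[of w i] by simp
  have per: "periodic_on w (Dw w i) (Sw w i) (Ew w i)"
    by (rule periodic_on_run[OF assms(1,2)])
  show "Sw w j = Sw w i"
    by (rule Sw_eqI[OF assms(3,4)])
      (use Sw_spec[OF assms(1,2)] periodic_on_mono[OF per] assms D in auto)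
  show "Ew w j = Ew w i"
    by (rule Ew_eqI[OF assms(3,4)])
      (use Ew_spec[OF assms(1,2)] periodic_on_mono[OF per] assms D in auto)
qed

lemma Dw_eq_if_same_run:
  assumes "1 \<le> i" "i \<le> length w" "1 \<le> j" "j \<le> length w" "Sw w j = Sw w i" "Ew w j = Ew w i"
  shows "Dw w j = Dw w i"
  using least_period_run[OF assms(1,2)] least_period_run[OF assms(3,4)] assms(5,6) by simp

context
  fixes w :: word and c :: bool and i L E D :: nat
  assumes bounds: "1 \<le> i" "i \<le> L" "L \<le> E" "E + 1 \<le> length w"
    and ly: "lyndon_fac w c i L" and Dd: "D = L - i + 1" and per: "periodic_on w D i E"
    and break: "letter w (E + 1 - D) = c" "letter w (E + 1) = (\<not>c)"
begin

lemma shift_mismatch_in_extend_dvd: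
  assumes q: "0 < q" "q \<le> E + 1 - i" and dvd: "D dvd q"
  shows "shift_mismatch_in w c i (E + 1) q"
  unfolding shift_mismatch_in_def
proof (intro exI[of _ "E + 1 - q"] conjI allI impI)
  show "i \<le> E + 1 - q" "E + 1 - q + q \<le> E + 1" using q by auto
  fix x assume x: "i \<le> x" "x < E + 1 - q"
  show "letter w (x + q) = letter w x"
    using periodic_on_dvd[OF per, of x "x + q"] x dvd by auto
next
  have "D \<le> q" "1 \<le> D" using q dvd Dd by (auto simp: dvd_imp_le)
  then have "letter w (E + 1 - q) = letter w (E + 1 - D)"
    by (intro periodic_on_dvd[OF per]) (use q dvd bounds in \<open>auto simp: dvd_diff_nat\<close>)
  then show "letter w (E + 1 - q) = c" using break by simp
  show "letter w (E + 1 - q + q) = (\<not>c)" using break q bounds by simp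
qed

text \<open>For other shifts \<open>q\<close>, the mismatch of the root at shift \<open>q mod D\<close> is transported by the
  period, unless it falls beyond \<open>E\<close>; then the new last letter provides the mismatch.\<close>
lemma shift_mismatch_in_extend_not_dvd:
  assumes q: "0 < q" "q \<le> E + 1 - i" and not_dvd: "\<not> D dvd q"
  shows "shift_mismatch_in w c i (E + 1) q"
proof -
  define m where "m = E + 1"
  define r where "r = q mod D"
  have D1: "1 \<le> D" "D \<le> E" using Dd bounds by auto
  have cm: "letter w (m - D) = c" "letter w m = (\<not>c)" using break unfolding m_def by auto
  have r: "0 < r" "r < D" using not_dvd D1 unfolding r_def by (auto simp: dvd_eq_mod_eq_0)
  have qr: "q - r = D * (q div D)" unfolding r_def by (simp add: minus_mod_eq_mult_div)
  have rq: "r \<le> q" unfolding r_def by simp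
  have "shift_mismatch_in w c i L r" using lyndon_fac_iff[of i L w c] ly bounds r Dd by auto
  then obtain k0 where k0: "i \<le> k0" "k0 + r \<le> L"
    "\<forall>x. i \<le> x \<longrightarrow> x < k0 \<longrightarrow> letter w (x+r) = letter w x" "letter w k0 = c" "letter w (k0+r) = (\<not>c)"
    unfolding shift_mismatch_in_def by blast
  have H: "letter w (x + r) = letter w (x + q)" if "i \<le> x" "x + q \<le> E" for x
    by (rule periodic_on_dvd[OF per]) (use that rq qr in auto)
  show ?thesis unfolding m_def[symmetric]
  proof (cases "k0 + q \<le> E")
    case True
    show "shift_mismatch_in w c i m q" unfolding shift_mismatch_in_def
    proof (intro exI[of _ k0] conjI allI impI)
      show "i \<le> k0" "k0 + q \<le> m" using k0 True m_def by auto
      fix x assume x: "i \<le> x" "x < k0"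
      then show "letter w (x + q) = letter w x" using H[of x] k0(3) True by auto
    next
      show "letter w k0 = c" "letter w (k0 + q) = (\<not>c)" using H[of k0] k0 True by auto
    qed
  next
    case False
    show "shift_mismatch_in w c i m q" unfolding shift_mismatch_in_def
    proof (intro exI[of _ "m - q"] conjI allI impI)
      show "i \<le> m - q" "m - q + q \<le> m" using q m_def by auto
      fix x assume x: "i \<le> x" "x < m - q"
      then show "letter w (x + q) = letter w x" using H[of x] k0(3) False m_def by auto
    next
      show "letter w (m - q + q) = (\<not>c)" using cm q m_def by auto
      show "letter w (m - q) = c"
      proof (cases "m - q = k0")
        case True then show ?thesis using k0 by simp
      next
        case False
        then have lt: "m - q < k0" using \<open>\<not> k0 + q \<le> E\<close> m_def by auto
        have "i \<le> m - q" using q m_def by simp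
        then have e1: "letter w (m - q + r) = letter w (m - q)" using k0(3) lt by blast
        have qD: "D \<le> q"
        proof (rule ccontr)
          assume "\<not> D \<le> q"
          then have "r = q" unfolding r_def by simp
          then show False using lt k0(2) bounds q m_def by linarith
        qed
        then have "0 < q div D" using D1 by (simp add: div_greater_zero_iff)
        then have "D * 1 \<le> D * (q div D)" by (intro mult_le_mono2) simp
        then have "D \<le> q - r" using qr by simp
        moreover have "m - D - (m - q + r) = D * (q div D - 1)"
          using q qD rq r m_def D1 qr by (simp add: diff_mult_distrib2)
        ultimately have "letter w (m - q + r) = letter w (m - D)"
          by (intro periodic_on_dvd[OF per]) (use q rq D1 m_def in auto)
        then show ?thesis using e1 cm by simp
      qed
    qed
  qed
qed

lemma lyndon_fac_extend: "lyndon_fac w c i (E + 1)"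
  using shift_mismatch_in_extend_dvd shift_mismatch_in_extend_not_dvd bounds
  by (subst lyndon_fac_iff) auto

end

text \<open>The two roots are rotations of each other, so each would have to be \<open><\<^sub>c\<close>-smaller than
  the other.\<close>
lemma no_close_lyndon_conjugates:
  assumes per: "periodic_on w D s e"
    and ab: "s \<le> a" "a < b" "b < a + D" "b + D - 1 \<le> e" "e \<le> length w" "1 \<le> s"
    and D2: "2 \<le> D" and la: "lyndon_fac w c a (a + D - 1)" and lb: "lyndon_fac w c b (b + D - 1)"
  shows False
proof -
  define q where "q = b - a"
  define q' where "q' = D - q"
  have q: "0 < q" "q \<le> (a + D - 1) - a" "0 < q'" "q' \<le> (b + D - 1) - b" "q + q' = D"
    using ab D2 unfolding q_def q'_def by auto
  have "shift_mismatch_in w c a (a + D - 1) q"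
    using lyndon_fac_iff[of a "a + D - 1" w c] la q ab D2 by auto
  then obtain k where k: "a \<le> k" "k + q \<le> a + D - 1"
    "\<forall>x. a \<le> x \<longrightarrow> x < k \<longrightarrow> letter w (x+q) = letter w x"
    "letter w k = c" "letter w (k+q) = (\<not>c)" unfolding shift_mismatch_in_def by blast
  have "shift_mismatch_in w c b (b + D - 1) q'"
    using lyndon_fac_iff[of b "b + D - 1" w c] lb q ab D2 by auto
  then obtain k' where k': "b \<le> k'" "k' + q' \<le> b + D - 1"
    "\<forall>x. b \<le> x \<longrightarrow> x < k' \<longrightarrow> letter w (x+q') = letter w x"
    "letter w k' = c" "letter w (k'+q') = (\<not>c)" unfolding shift_mismatch_in_def by blast
  define y0 where "y0 = k' - q"
  have bq: "b = a + q" using ab unfolding q_def by auto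
  have y0: "a \<le> y0" "y0 + q = k'" "y0 + D = k' + q'" using k' bq q unfolding y0_def by auto
  have PD: "letter w y = letter w (y + D)" if "s \<le> y" "y + D \<le> e" for y
    using per that unfolding periodic_on_def by blast
  have A1: "letter w (y + q) = letter w y" if y: "a \<le> y" "y < y0" for y
  proof -
    have "letter w (y + q + q') = letter w (y + q)" using k'(3) y y0 bq by auto
    moreover have "y + q + q' = y + D" using q by simp
    moreover have "letter w y = letter w (y + D)" using PD[of y] y y0 k' ab by auto
    ultimately show ?thesis by simp
  qed
  have A2: "letter w (y0 + q) = c" using y0 k' by simp
  have A3: "letter w y0 = (\<not>c)" using PD[of y0] y0 k' ab by auto
  show False
  proof (cases "k < y0")
    case True then show False using A1[of k] k by auto
  next
    case False
    then consider "y0 < k" | "y0 = k" by linarith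
    then show False
    proof cases
      case 1 then show False using k(3) y0 A2 A3 by auto
    next
      case 2 then show False using k(4) A3 by simp
    qed
  qed
qed

definition run_roots :: "word \<Rightarrow> nat \<Rightarrow> nat \<Rightarrow> bool \<Rightarrow> nat set" where
  "run_roots w s e c =
     {i. 1 < i \<and> i \<le> length w \<and> Sw w i = s \<and> Ew w i = e \<and> lyndon c (fac w i (Lw w i))}"

lemma rw_eq_Min:
  "rw w s e c = (if run_roots w s e c = {} then \<infinity> else enat (Min (run_roots w s e c)))"
  unfolding rw_def run_roots_def Let_def by simp

lemma finite_run_roots: "finite (run_roots w s e c)"
  unfolding run_roots_def by (rule finite_subset[of _ "{..length w}"]) auto

text \<open>\<open>f(r)\<close> is the order whose first root comes last, so a root of order \<open>f(r)\<close> is preceded by one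
  of the other order.\<close>
lemma earlier_opposite_root:
  assumes i: "1 < i" "i \<le> length w" and S: "Sw w i = s" and E: "Ew w i = e"
    and ly: "lyndon_fac w c i (Lw w i)" and f: "fw w s e = c" and D2: "2 \<le> Dw w i"
  shows "\<exists>b. b \<in> run_roots w s e (\<not>c) \<and> b < i"
proof -
  have disj: "j \<notin> run_roots w s e True \<or> j \<notin> run_roots w s e False" for j
  proof (rule ccontr)
    assume "\<not> (j \<notin> run_roots w s e True \<or> j \<notin> run_roots w s e False)"
    then have j: "1 < j" "j \<le> length w" "Sw w j = s" "Ew w j = e"
      "lyndon_fac w True j (Lw w j)" "lyndon_fac w False j (Lw w j)"
      unfolding run_roots_def by auto
    have "Dw w j = Dw w i" using Dw_eq_if_same_run[of i w j] i j S E by auto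
    then have "j < Lw w j" using D2 Lw_eq[of j w] j by auto
    then show False using lyndon_fac_not_both[of j "Lw w j" w True] j Lw_spec[of j w] by auto
  qed
  have iin: "i \<in> run_roots w s e c" unfolding run_roots_def using i S E ly by auto
  have lp: "least_period (fac w s e) \<noteq> 1" using least_period_run[of i w] i S E D2 by auto
  show ?thesis
  proof (cases c)
    case True
    then have "\<not> (rw w s e True \<le> rw w s e False)"
      using f lp unfolding fw_def by (auto split: if_splits)
    then have lt: "rw w s e False < rw w s e True" by auto
    have neT: "run_roots w s e True \<noteq> {}" using iin True by auto
    have mT: "Min (run_roots w s e True) \<le> i" using Min_le[OF finite_run_roots] iin True by auto
    have neF: "run_roots w s e False \<noteq> {}" using lt neT by (auto simp: rw_eq_Min split: if_splits)
    have "Min (run_roots w s e False) < Min (run_roots w s e True)"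
      using lt neT neF by (simp add: rw_eq_Min)
    moreover have "Min (run_roots w s e False) \<in> run_roots w s e False"
      using Min_in[OF finite_run_roots neF] .
    ultimately show ?thesis using True mT by (intro exI[of _ "Min (run_roots w s e False)"]) auto
  next
    case False
    then have le: "rw w s e True \<le> rw w s e False"
      using f lp unfolding fw_def by (auto split: if_splits)
    have neF: "run_roots w s e False \<noteq> {}" using iin False by auto
    have mF: "Min (run_roots w s e False) \<le> i" using Min_le[OF finite_run_roots] iin False by auto
    have neT: "run_roots w s e True \<noteq> {}" using le neF by (auto simp: rw_eq_Min split: if_splits)
    have "Min (run_roots w s e True) \<le> Min (run_roots w s e False)"
      using le neT neF by (simp add: rw_eq_Min)
    moreover have mi: "Min (run_roots w s e True) \<in> run_roots w s e True"
      using Min_in[OF finite_run_roots neT] .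
    moreover have "Min (run_roots w s e True) \<noteq> i" using disj[of i] iin False mi by auto
    ultimately show ?thesis using False mF by (intro exI[of _ "Min (run_roots w s e True)"]) auto
  qed
qed


lemma Sw_less:
  assumes b: "1 < b" "b \<le> length w" and D2: "2 \<le> Dw w b"
  shows "Sw w b < b"
proof -
  have b1: "1 \<le> b" using b by simp
  have L: "Lw w b = b - 1 + Dw w b" using Lw_eq[OF b1 b(2)] b by simp
  have "letter w (Lw w b) = (\<not> cw w b)"
    using lyndon_fac_ends[OF b1 _ Lw_spec(2,3)[OF b1 b(2)]] L D2 b by auto
  then have "letter w (b - 1) = letter w (b - 1 + Dw w b)" unfolding L cw_def by simp
  then have "periodic_on w (Dw w b) (b - 1) (Lw w b)" unfolding periodic_on_def L by force
  then have "Sw w b \<le> b - 1" using Sw_le[OF b1 b(2)] b by simp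
  then show ?thesis using b by simp
qed

lemma lyndon_fac_periodic_shift:
  assumes per: "periodic_on w D s e" and "e \<le> length w" "1 \<le> s" "1 \<le> D"
    and ab: "s \<le> a" "a \<le> b" "b + D - 1 \<le> e" "D dvd (b - a)"
    and ly: "lyndon_fac w c a (a + D - 1)"
  shows "lyndon_fac w c b (b + D - 1)"
proof -
  have "letter w (a + t) = letter w (b + t)" if "t \<le> D - 1" for t
    by (rule periodic_on_dvd[OF per]) (use that assms in auto)
  then have "fac w a (a + D - 1) = fac w b (b + (a + D - 1 - a))"
    by (intro fac_eqI) (use assms in auto)
  then show ?thesis using ly \<open>1 \<le> D\<close> by (simp add: add.commute)
qed

text \<open>The position to which a lost position \<open>i\<close> is mapped when its copy in \<open>w\<^sub>1 w w\<^sub>2\<close> is not lost.\<close>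
definition partner :: "word \<Rightarrow> nat \<Rightarrow> nat \<Rightarrow> bool" where
  "partner w i j \<longleftrightarrow> Sw w i < j \<and> j < i \<and> i < j + Dw w i \<and> Dw w j = Dw w i \<and>
     Ew w i = length w \<and> i + Dw w i \<le> length w \<and> 2 \<le> Dw w i \<and>
     cw w j = (\<not> cw w i) \<and> lyndon_fac w (cw w j) j (j + Dw w i - 1) \<and> \<not> lost w j"

text \<open>Such a copy is not lost because \<open>f(r)\<close> selects the order of \<open>i\<close>.\<close>
lemma opposite_root_in_final_run:
  assumes i: "1 < i" "i \<le> length w" and E: "Ew w i = length w" and D2: "2 \<le> Dw w i"
    and f: "fw w (Sw w i) (length w) = cw w i"
    and j: "Sw w i < j" "j + Dw w i - 1 \<le> length w"
    and lyj: "lyndon_fac w (\<not> cw w i) j (j + Dw w i - 1)"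
  shows "cw w j = (\<not> cw w i)" "Dw w j = Dw w i" "\<not> lost w j"
proof -
  define c where "c = cw w i"
  define D where "D = Dw w i"
  have i1: "1 \<le> i" using i by simp
  have j1: "1 \<le> j" and D1: "1 \<le> D" using j Sw_spec(1)[OF i1 i(2)] D2 D_def by auto
  have per: "periodic_on w D (Sw w i) (length w)" using periodic_on_run[OF i1 i(2)] E D_def by simp
  show cwj: "cw w j = (\<not> c)"
  proof -
    have "letter w (j - 1) = letter w (j - 1 + D)"
      using per j unfolding periodic_on_def D_def by auto
    moreover have "letter w (j + D - 1) = c"
      using lyndon_fac_ends[OF j1 _ _ lyj] j(2) D2 D_def c_def by auto
    moreover have "j - 1 + D = j + D - 1" using j1 by auto
    ultimately show ?thesis unfolding cw_def by simp
  qed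
  have Lj: "Lw w j = j + D - 1"
    by (rule Lw_eq_of_periodic_root[of j D "length w" w])
      (use j1 D1 j lyj cwj periodic_on_mono[OF per] D_def c_def in auto)
  have run_j: "Dw w j = D" "Sw w j = Sw w i" "Ew w j = length w"
    using same_run_of_root[OF i1 i(2) j1] Lj j E D_def D1 by auto
  then show "Dw w j = Dw w i" using D_def by simp
  show "\<not> lost w j"
  proof
    assume "lost w j"
    then have "lyndon_fac w c j (j + D - 1)" using run_j Lj f c_def unfolding lost_def by auto
    moreover have "j < j + D - 1" using D2 D_def by simp
    ultimately show False using lyndon_fac_not_both[OF j1 _ _ _ lyj] j(2) D_def c_def by auto
  qed
qed

lemma partner_exists:
  assumes i: "1 < i" "i \<le> length w" and E: "Ew w i = length w"
    and Si: "Sw w i < i" and iD: "i + Dw w i \<le> length w" and D2: "2 \<le> Dw w i"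
    and f: "fw w (Sw w i) (length w) = cw w i"
  shows "\<exists>j. partner w i j"
proof -
  define c where "c = cw w i"
  define D where "D = Dw w i"
  define S where "S = Sw w i"
  define n where "n = length w"
  have i1: "1 \<le> i" and D1: "1 \<le> D" using i D2 D_def by auto
  obtain b where b: "b \<in> run_roots w S n (\<not>c)" "b < i"
    using earlier_opposite_root[OF i S_def[symmetric] E[folded n_def] Lw_spec(3)[OF i1 i(2)]]
      f D2 c_def n_def S_def by auto
  have b': "1 < b" "b \<le> n" "Sw w b = S" "Ew w b = n" "lyndon_fac w (\<not>c) b (Lw w b)"
    using b unfolding run_roots_def n_def by auto
  have b1: "1 \<le> b" using b' by auto
  have Db: "Dw w b = D"
    using Dw_eq_if_same_run[OF i1 i(2) b1 b'(2)[unfolded n_def]] b' S_def E D_def n_def by auto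
  have lyb: "lyndon_fac w (\<not>c) b (b + D - 1)"
    using b'(5) Lw_eq[OF b1 b'(2)[unfolded n_def]] Db by simp
  have per: "periodic_on w D S n" using periodic_on_run[OF i1 i(2)] S_def E D_def n_def by simp
  have bS: "S < b" using Sw_less[OF b'(1) b'(2)[unfolded n_def]] Db D2 D_def b' by simp
  \<comment> \<open>the last copy of the root of \<open>b\<close> that starts at or before \<open>i\<close>\<close>
  define j where "j = i - (i - b) mod D"
  have md: "(i - b) mod D \<le> i - b" by (rule mod_less_eq_dividend)
  have "(i - b) mod D < D" using D1 by simp
  then have jb: "b \<le> j" "j \<le> i" "i < j + D" unfolding j_def using b(2) md by arith+
  have "j - b = (i - b) - (i - b) mod D" unfolding j_def using b(2) md by arith
  also have "\<dots> = D * ((i - b) div D)" by (simp add: minus_mod_eq_mult_div)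
  finally have jdvd: "D dvd (j - b)" by simp
  have jn: "j + D - 1 \<le> n" using jb iD D_def n_def by auto
  have lyj: "lyndon_fac w (\<not>c) j (j + D - 1)"
    by (rule lyndon_fac_periodic_shift[OF per _ _ D1 _ jb(1) jn jdvd lyb])
      (use bS Sw_spec(1)[OF i1 i(2)] S_def n_def in auto)
  have ji: "j < i"
  proof -
    have "lyndon_fac w c i (i + D - 1)"
      using Lw_spec(3)[OF i1 i(2)] Lw_eq[OF i1 i(2)] c_def D_def by simp
    moreover have "i < i + D - 1" using D2 D_def by simp
    ultimately have "j \<noteq> i" using lyndon_fac_not_both[OF i1] lyj jn n_def by auto
    then show ?thesis using jb by simp
  qed
  show ?thesis unfolding partner_def
    using opposite_root_in_final_run[OF i E D2 f, of j] bS jb ji E iD D2 lyj S_def D_def c_def n_def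
    by (intro exI[of _ j]) auto
qed

lemma letter_shift:
  assumes "1 \<le> k" "k \<le> length w"
  shows "letter (w1 @ w @ w2) (length w1 + k) = letter w k"
proof -
  have e: "length w1 + k - 1 = length w1 + (k - 1)" using assms by simp
  have "(w1 @ w @ w2) ! (length w1 + (k - 1)) = (w @ w2) ! (k - 1)" by (rule nth_append_length_plus)
  also have "\<dots> = w ! (k - 1)" using assms by (intro nth_append_left) simp
  finally show ?thesis unfolding letter_def e .
qed

lemma fac_shift:
  assumes "1 \<le> i" "i \<le> j" "j \<le> length w"
  shows "fac (w1 @ w @ w2) (length w1 + i) (length w1 + j) = fac w i j"
proof -
  have "fac w i j = fac (w1 @ w @ w2) (length w1 + i) (length w1 + i + (j - i))"
  proof (rule fac_eqI)
    fix s assume "s \<le> j - i"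
    then show "letter w (i + s) = letter (w1 @ w @ w2) (length w1 + i + s)"
      using letter_shift[of "i+s" w w1 w2] assms by (simp add: add.assoc)
  qed (use assms in auto)
  then show ?thesis using assms by simp
qed

lemma periodic_on_shift:
  assumes "1 \<le> x" "y \<le> length w"
  shows "periodic_on (w1 @ w @ w2) D (length w1 + x) (length w1 + y) \<longleftrightarrow> periodic_on w D x y"
proof
  assume P: "periodic_on (w1 @ w @ w2) D (length w1 + x) (length w1 + y)"
  show "periodic_on w D x y" unfolding periodic_on_def
  proof (intro allI impI)
    fix k assume k: "x \<le> k" "k + D \<le> y"
    have "letter (w1 @ w @ w2) (length w1 + k) = letter (w1 @ w @ w2) (length w1 + k + D)"
      using P k unfolding periodic_on_def by auto
    then show "letter w k = letter w (k + D)"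
      using letter_shift[of k w w1 w2] letter_shift[of "k+D" w w1 w2] k assms
        by (simp add: add.assoc)
  qed
next
  assume P: "periodic_on w D x y"
  show "periodic_on (w1 @ w @ w2) D (length w1 + x) (length w1 + y)" unfolding periodic_on_def
  proof (intro allI impI)
    fix k assume k: "length w1 + x \<le> k" "k + D \<le> length w1 + y"
    define k' where "k' = k - length w1"
    have kk: "k = length w1 + k'" "x \<le> k'" "k' + D \<le> y" using k unfolding k'_def by auto
    have "letter w k' = letter w (k' + D)" using P kk unfolding periodic_on_def by auto
    then show "letter (w1 @ w @ w2) k = letter (w1 @ w @ w2) (k + D)"
      using letter_shift[of k' w w1 w2] letter_shift[of "k'+D" w w1 w2] kk assms
        by (simp add: add.assoc)
  qed
qed

lemma cw_shift:
  assumes "2 \<le> i" "i \<le> length w"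
  shows "cw (w1 @ w @ w2) (length w1 + i) = cw w i"
proof -
  have "length w1 + i - 1 = length w1 + (i - 1)" using assms by simp
  then show ?thesis unfolding cw_def using letter_shift[of "i - 1" w w1 w2] assms by simp
qed

lemma Lw_shift:
  assumes "2 \<le> i" "i \<le> length w"
  shows "Lw (w1 @ w @ w2) (length w1 + i) = length w1 + Lw w i \<or>
    length w1 + length w < Lw (w1 @ w @ w2) (length w1 + i)"
proof -
  let ?W = "w1 @ w @ w2"
  let ?o = "length w1"
  have i1: "1 \<le> i" using assms by simp
  have W1: "1 \<le> ?o + i" "?o + i \<le> length ?W" using assms by auto
  have L: "i \<le> Lw w i" "Lw w i \<le> length w" "lyndon_fac w (cw w i) i (Lw w i)"
    using Lw_spec[OF i1 assms(2)] by auto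
  have LW: "?o + i \<le> Lw ?W (?o + i)" "Lw ?W (?o + i) \<le> length ?W"
    "lyndon_fac ?W (cw ?W (?o+i)) (?o+i) (Lw ?W (?o + i))"
    using Lw_spec[OF W1] by auto
  have ge: "?o + Lw w i \<le> Lw ?W (?o + i)"
  proof (rule ccontr)
    assume "\<not> ?o + Lw w i \<le> Lw ?W (?o + i)"
    then have "\<not> lyndon_fac ?W (cw ?W (?o+i)) (?o+i) (?o + Lw w i)"
      using Lw_maximal[OF W1] L by auto
    then show False using fac_shift[of i "Lw w i" w w1 w2] cw_shift[OF assms, of w1 w2] L i1 by simp
  qed
  show ?thesis
  proof (cases "Lw ?W (?o + i) \<le> ?o + length w")
    case True
    define m where "m = Lw ?W (?o + i) - ?o"
    have m: "Lw ?W (?o + i) = ?o + m" "i \<le> m" "m \<le> length w" using LW True unfolding m_def by auto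
    have "lyndon_fac w (cw w i) i m"
      using LW(3) m fac_shift[of i m w w1 w2] cw_shift[OF assms, of w1 w2] i1 by simp
    then have "m \<le> Lw w i" using Lw_maximal[OF i1 assms(2), of m] m by (meson not_le)
    then show ?thesis using ge m by auto
  next
    case False then show ?thesis by auto
  qed
qed

lemma lost_iff_run_length:
  assumes "1 < i" "i \<le> length w"
  shows "lost w i \<longleftrightarrow>
    ((Ew w i < length w \<and> 1 < Sw w i \<and> \<not> 2 * Dw w i \<le> Ew w i - Sw w i + 1) \<or>
     (Ew w i < length w \<and> 2 * Dw w i \<le> Ew w i - Sw w i + 1 \<and> i + Dw w i \<le> Ew w i) \<or>
     (Ew w i = length w \<and> 2 * Dw w i \<le> Ew w i - Sw w i + 1 \<and> i + Dw w i \<le> Ew w i \<and> Sw w i < i \<and>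
        lyndon_fac w (fw w (Sw w i) (Ew w i)) i (Lw w i)))"
  unfolding lost_def using is_run_iff[of i w] assms by auto

lemma lost_bounds:
  assumes l: "lost w i"
  shows "1 < i \<and> i < length w"
proof -
  have i: "1 < i" "i \<le> length w" using l unfolding lost_def by auto
  have "i < length w"
  proof (rule ccontr)
    assume "\<not> i < length w"
    then have "i = length w" using i by auto
    moreover have "i \<le> Ew w i" using Ew_spec(1)[of i w] Lw_spec(1)[of i w] i by auto
    moreover have "Ew w i \<le> length w" using Ew_spec(2)[of i w] i by auto
    ultimately show False using l[unfolded lost_iff_run_length[OF i]] Dw_ge_1[of w i] by auto
  qed
  then show ?thesis using i by auto
qed

lemma inj_on_redirect_Max:
  fixes \<phi> :: "nat \<Rightarrow> nat"
  assumes fin: "finite A" and inj: "inj_on \<phi> (insert b A)" and "b \<notin> A"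
    and below: "\<forall>a\<in>insert b A. \<phi> a \<le> a" and max: "\<forall>a\<in>A. a \<le> b"
  defines "m \<equiv> Max (\<phi> ` insert b A)"
  shows "m \<in> \<phi> ` insert b A" "m \<le> b"
    and "inj_on (\<lambda>x. if \<phi> x = m then \<phi> b else \<phi> x) A"
    and "\<forall>a\<in>A. (if \<phi> a = m then \<phi> b else \<phi> a) \<le> a"
    and "\<forall>a\<in>A. (if \<phi> a = m then \<phi> b else \<phi> a) \<in> \<phi> ` insert b A \<and>
      (if \<phi> a = m then \<phi> b else \<phi> a) < m"
proof -
  have fin': "finite (\<phi> ` insert b A)" using fin by simp
  have m_ge: "\<phi> x \<le> m" if "x \<in> insert b A" for x unfolding m_def using Max_ge[OF fin'] that by auto
  show m_in: "m \<in> \<phi> ` insert b A" unfolding m_def using Max_in[OF fin'] by auto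
  then show "m \<le> b" using below max by force
  have ne: "\<phi> x \<noteq> \<phi> b" if "x \<in> A" for x
  proof
    assume "\<phi> x = \<phi> b"
    then have "x = b" using inj_onD[OF inj] that by simp
    then show False using that \<open>b \<notin> A\<close> by simp
  qed
  have inj_A: "\<phi> x = \<phi> y \<Longrightarrow> x = y" if "x \<in> A" "y \<in> A" for x y
    using inj_onD[OF inj] that by simp
  show "inj_on (\<lambda>x. if \<phi> x = m then \<phi> b else \<phi> x) A"
  proof (rule inj_onI)
    fix x y assume xy: "x \<in> A" "y \<in> A"
      and eq: "(if \<phi> x = m then \<phi> b else \<phi> x) = (if \<phi> y = m then \<phi> b else \<phi> y)"
    show "x = y"
    proof (cases "\<phi> x = m"; cases "\<phi> y = m")
      assume "\<phi> x = m" "\<phi> y = m" then show ?thesis using inj_A xy by simp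
    next
      assume "\<phi> x = m" "\<phi> y \<noteq> m" then show ?thesis using eq ne[OF xy(2)] by simp
    next
      assume "\<phi> x \<noteq> m" "\<phi> y = m" then show ?thesis using eq ne[OF xy(1)] by simp
    next
      assume "\<phi> x \<noteq> m" "\<phi> y \<noteq> m" then show ?thesis using eq inj_A xy by simp
    qed
  qed
  show "\<forall>a\<in>A. (if \<phi> a = m then \<phi> b else \<phi> a) \<le> a"
  proof
    fix a assume "a \<in> A"
    then have "\<phi> a \<le> a" "\<phi> b \<le> m" using below m_ge by auto
    then show "(if \<phi> a = m then \<phi> b else \<phi> a) \<le> a" by auto
  qed
  show "\<forall>a\<in>A. (if \<phi> a = m then \<phi> b else \<phi> a) \<in> \<phi> ` insert b A \<and>
      (if \<phi> a = m then \<phi> b else \<phi> a) < m"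
  proof
    fix a assume a: "a \<in> A"
    then have "\<phi> a \<le> m" "\<phi> b \<le> m" using m_ge by auto
    moreover have "\<phi> b \<noteq> \<phi> a" using ne[OF a] by simp
    ultimately show "(if \<phi> a = m then \<phi> b else \<phi> a) \<in> \<phi> ` insert b A \<and>
      (if \<phi> a = m then \<phi> b else \<phi> a) < m" using a by auto
  qed
qed

lemma strict_mono_on_inj_below:
  fixes \<phi> :: "nat \<Rightarrow> nat"
  assumes "finite A" "inj_on \<phi> A" "\<forall>a\<in>A. \<phi> a \<le> a"
  shows "\<exists>\<mu>. strict_mono_on A \<mu> \<and> (\<forall>a\<in>A. \<mu> a \<in> \<phi> ` A \<and> \<mu> a \<le> a)"
  using assms
proof (induction A arbitrary: \<phi> rule: finite_linorder_max_induct)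
  case empty
  then show ?case by (auto intro: strict_mono_onI)
next
  case (insert b A)
  define m where "m = Max (\<phi> ` insert b A)"
  have bA: "b \<notin> A" "\<forall>a\<in>A. a \<le> b" using insert.hyps(2) by auto
  note redirect = inj_on_redirect_Max[OF insert.hyps(1) insert.prems(1) bA(1) insert.prems(2) bA(2),
      folded m_def]
  define \<phi>' where "\<phi>' = (\<lambda>x. if \<phi> x = m then \<phi> b else \<phi> x)"
  have \<phi>': "inj_on \<phi>' A" "\<forall>a\<in>A. \<phi>' a \<le> a" "\<forall>a\<in>A. \<phi>' a \<in> \<phi> ` insert b A \<and> \<phi>' a < m"
    using redirect(3-5) unfolding \<phi>'_def by simp_all
  obtain \<mu>' where \<mu>': "strict_mono_on A \<mu>'" "\<forall>a\<in>A. \<mu>' a \<in> \<phi>' ` A \<and> \<mu>' a \<le> a"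
    using insert.IH[OF \<phi>'(1,2)] by blast
  have \<mu>'_A: "\<mu>' a \<in> \<phi> ` insert b A \<and> \<mu>' a < m" if "a \<in> A" for a
    using \<mu>'(2) \<phi>'(3) that by fastforce
  define \<mu> where "\<mu> = \<mu>'(b := m)"
  have "strict_mono_on (insert b A) \<mu>"
  proof (rule strict_mono_onI)
    fix r s assume rs: "r \<in> insert b A" "s \<in> insert b A" "r < s"
    then consider "s = b" "r \<in> A" | "s \<in> A" "r \<in> A" using insert.hyps(2) by fastforce
    then show "\<mu> r < \<mu> s"
    proof cases
      case 1 then show ?thesis using \<mu>'_A bA(1) by (auto simp: \<mu>_def)
    next
      case 2 then show ?thesis using strict_mono_onD[OF \<mu>'(1)] rs bA(1) by (auto simp: \<mu>_def)
    qed
  qed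
  moreover have "\<forall>a\<in>insert b A. \<mu> a \<in> \<phi> ` insert b A \<and> \<mu> a \<le> a"
  proof
    fix a assume "a \<in> insert b A"
    then consider "a = b" | "a \<in> A" "a \<noteq> b" using bA(1) by blast
    then show "\<mu> a \<in> \<phi> ` insert b A \<and> \<mu> a \<le> a"
      by cases (use \<mu>'_A \<mu>'(2) redirect(1,2) in \<open>auto simp: \<mu>_def\<close>)
  qed
  ultimately show ?case by blast
qed

locale lost_position =
  fixes w w1 w2 :: word and i :: nat
  assumes lost: "lost w i"
begin

abbreviation W :: word where "W \<equiv> w1 @ w @ w2"
abbreviation i' :: nat where "i' \<equiv> length w1 + i"
abbreviation c :: bool where "c \<equiv> cw w i"
abbreviation L :: nat where "L \<equiv> Lw w i"
abbreviation D :: nat where "D \<equiv> Dw w i"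
abbreviation S :: nat where "S \<equiv> Sw w i"
abbreviation E :: nat where "E \<equiv> Ew w i"

lemma i_bounds: "1 < i" "i \<le> length w" "1 \<le> i" "2 \<le> i"
  using lost unfolding lost_def by auto

lemma i'_bounds: "1 < i'" "i' \<le> length W" "1 \<le> i'"
  using i_bounds by auto

lemmas L_spec = Lw_spec[OF i_bounds(3,2)] Lw_eq[OF i_bounds(3,2)]
lemmas S_spec = Sw_spec[OF i_bounds(3,2)]
lemmas E_spec = Ew_spec[OF i_bounds(3,2)]

lemma lost_cases:
  "(E < length w \<and> 1 < S \<and> \<not> 2 * D \<le> E - S + 1) \<or>
   (E < length w \<and> 2 * D \<le> E - S + 1 \<and> i + D \<le> E) \<or>
   (E = length w \<and> 2 * D \<le> E - S + 1 \<and> i + D \<le> E \<and> S < i \<and> lyndon_fac w (fw w S E) i L)"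
  using lost lost_iff_run_length[OF i_bounds(1,2)] by blast

lemma cw_W: "cw W i' = c"
  using cw_shift[OF i_bounds(4,2)] .

lemma lyndon_fac_W_iff:
  "1 \<le> a \<Longrightarrow> a \<le> b \<Longrightarrow> b \<le> length w \<Longrightarrow>
    lyndon_fac W c' (length w1 + a) (length w1 + b) \<longleftrightarrow> lyndon_fac w c' a b"
  using fac_shift by metis

context
  assumes root_kept: "Lw W i' = length w1 + L"
begin

lemma Dw_W: "Dw W i' = D"
  using root_kept unfolding Dw_def by simp

lemma periodic_on_W_root: "periodic_on W D (length w1 + S) (Lw W i')"
  using periodic_on_shift[of S L w w1 w2 D] S_spec L_spec root_kept by simp

lemma Sw_W_le: "Sw W i' \<le> length w1 + S"
  by (rule Sw_le[OF i'_bounds(3,2)]) (use periodic_on_W_root Dw_W S_spec in auto)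

lemma Sw_W:
  assumes "1 < S"
  shows "Sw W i' = length w1 + S"
proof (rule Sw_eqI[OF i'_bounds(3,2)])
  show "1 \<le> length w1 + S" "length w1 + S \<le> i'" using S_spec by auto
  show "periodic_on W (Dw W i') (length w1 + S) (Lw W i')" using periodic_on_W_root Dw_W by simp
  have "letter W (length w1 + S - 1) = letter w (S - 1)"
    using letter_shift[of "S - 1" w w1 w2] assms S_spec i_bounds by (simp add: add_diff_assoc)
  moreover have "letter W (length w1 + (S - 1 + D)) = letter w (S - 1 + D)"
    using letter_shift[of "S - 1 + D" w w1 w2] assms S_spec L_spec by simp
  moreover have "length w1 + (S - 1 + D) = length w1 + S - 1 + D" using assms by simp
  ultimately show "length w1 + S = 1 \<or>
      letter W (length w1 + S - 1) \<noteq> letter W (length w1 + S - 1 + Dw W i')"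
    using S_spec assms Dw_W by auto
qed

lemma Ew_W:
  assumes "E < length w"
  shows "Ew W i' = length w1 + E"
proof (rule Ew_eqI[OF i'_bounds(3,2)])
  show "Lw W i' \<le> length w1 + E" "length w1 + E \<le> length W" using root_kept E_spec by auto
  show "periodic_on W (Dw W i') i' (length w1 + E)"
    using periodic_on_shift[of i E w w1 w2 D] E_spec i_bounds Dw_W by simp
  have "letter W (length w1 + E + 1) = letter w (E + 1)"
    using letter_shift[of "E + 1" w w1 w2] assms by simp
  moreover have "letter W (length w1 + E + 1 - D) = letter w (E + 1 - D)"
    using letter_shift[of "E + 1 - D" w w1 w2] assms E_spec L_spec i_bounds
      by (simp add: add_diff_assoc)
  ultimately show "length w1 + E = length W \<or>
      letter W (length w1 + E + 1) \<noteq> letter W (length w1 + E + 1 - Dw W i')"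
    using E_spec assms Dw_W by auto
qed

lemma Ew_W_ge:
  assumes "E = length w"
  shows "length w1 + length w \<le> Ew W i'"
  by (rule Ew_ge[OF i'_bounds(3)])
    (use periodic_on_shift[of i "length w" w w1 w2 D] E_spec assms i_bounds Dw_W in auto)

lemma run_at_end_if_root_kept:
  assumes nl: "\<not> lost W i'"
  shows "E = length w \<and> Ew W i' = length W \<and> 2 * D \<le> length w - S + 1 \<and> i + D \<le> length w \<and>
    S < i \<and> 2 \<le> D \<and> fw w S (length w) = c \<and> fw W (Sw W i') (length W) = (\<not> c)"
proof -
  have nlW: "\<not> (Ew W i' < length W \<and> 1 < Sw W i' \<and> \<not> 2 * Dw W i' \<le> Ew W i' - Sw W i' + 1)"
    "\<not> (Ew W i' < length W \<and> 2 * Dw W i' \<le> Ew W i' - Sw W i' + 1 \<and> i' + Dw W i' \<le> Ew W i')"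
    "\<not> (Ew W i' = length W \<and> 2 * Dw W i' \<le> Ew W i' - Sw W i' + 1 \<and> i' + Dw W i' \<le> Ew W i' \<and>
        Sw W i' < i' \<and> lyndon_fac W (fw W (Sw W i') (Ew W i')) i' (Lw W i'))"
    using nl[unfolded lost_iff_run_length[OF i'_bounds(1,2)] de_Morgan_disj] by blast+
  have end3: "E = length w \<and> 2 * D \<le> E - S + 1 \<and> i + D \<le> E \<and> S < i \<and> lyndon_fac w (fw w S E) i L"
  proof -
    have "\<not> (E < length w \<and> 1 < S \<and> \<not> 2 * D \<le> E - S + 1)"
    proof
      assume h: "E < length w \<and> 1 < S \<and> \<not> 2 * D \<le> E - S + 1"
      then have "Ew W i' = length w1 + E" "Sw W i' = length w1 + S" using Ew_W Sw_W by auto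
      then show False using nlW(1) h Dw_W by simp
    qed
    moreover have "\<not> (E < length w \<and> 2 * D \<le> E - S + 1 \<and> i + D \<le> E)"
    proof
      assume h: "E < length w \<and> 2 * D \<le> E - S + 1 \<and> i + D \<le> E"
      then have EW: "Ew W i' = length w1 + E" using Ew_W by auto
      have "Ew W i' < length W" "i' + Dw W i' \<le> Ew W i'" using EW h Dw_W by auto
      moreover have "2 * Dw W i' \<le> Ew W i' - Sw W i' + 1" using EW h Dw_W Sw_W_le by linarith
      ultimately show False using nlW(2) by blast
    qed
    ultimately show ?thesis using lost_cases by blast
  qed
  then have En: "E = length w" and iD: "i + D \<le> length w" by auto
  have runW: "2 * Dw W i' \<le> Ew W i' - Sw W i' + 1"
    using Ew_W_ge[OF En] Sw_W_le Dw_W end3 S_spec(1) by linarith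
  have iW: "i' + Dw W i' \<le> Ew W i'" using Ew_W_ge[OF En] Dw_W iD by simp
  have EW: "Ew W i' = length W"
    using nlW(2) runW iW Ew_spec(2)[OF i'_bounds(3,2)] by linarith
  have "\<not> lyndon_fac W (fw W (Sw W i') (length W)) i' (Lw W i')"
    using nlW(3) EW runW iW Sw_W_le end3 by simp
  then have nLY: "\<not> lyndon_fac w (fw W (Sw W i') (length W)) i L"
    using lyndon_fac_W_iff[of i L] L_spec(1,2) i_bounds(3) root_kept by simp
  have D2: "2 \<le> D"
  proof (rule ccontr)
    assume "\<not> 2 \<le> D"
    then have "L = i" using L_spec(4) Dw_ge_1[of w i] by simp
    then show False using nLY lyndon_fac_single[OF i_bounds(3,2)] by simp
  qed
  have iL: "i < L" using L_spec(4) D2 by simp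
  have "lyndon_fac w (fw w S (length w)) i L" using end3 by metis
  then have "fw w S (length w) = c"
    using lyndon_fac_order_unique[OF i_bounds(3) iL L_spec(2,3)] by simp
  moreover have "fw W (Sw W i') (length W) = (\<not> c)"
    using nLY L_spec(3) by (cases "fw W (Sw W i') (length W)"; cases c) auto
  ultimately show ?thesis using end3 EW D2 by auto
qed

lemma partner_lost_if_root_kept:
  assumes nl: "\<not> lost W i'"
  shows "\<exists>j. partner w i j \<and> lost W (length w1 + j)"
proof -
  have run: "E = length w" "Ew W i' = length W" "2 * D \<le> length w - S + 1" "i + D \<le> length w"
    "S < i" "2 \<le> D" "fw w S (length w) = c" "fw W (Sw W i') (length W) = (\<not> c)"
    using run_at_end_if_root_kept[OF nl] by auto
  obtain j where pj: "partner w i j"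
    using partner_exists[OF i_bounds(1,2)] run by blast
  then have j: "S < j" "j < i" "cw w j = (\<not> c)" "lyndon_fac w (\<not> c) j (j + D - 1)"
    unfolding partner_def by auto
  define j' where "j' = length w1 + j"
  have jn: "j + D - 1 \<le> length w" "2 \<le> j" using j run S_spec by auto
  have j'W: "1 \<le> j'" "j' \<le> length W" using jn j i_bounds unfolding j'_def by auto
  have cwj': "cw W j' = (\<not> c)"
    using cw_shift[of j w w1 w2] j jn i_bounds(2) unfolding j'_def by simp
  have lyj': "lyndon_fac W (\<not> c) j' (j' + D - 1)"
    using lyndon_fac_W_iff[of j "j + D - 1"] j jn Dw_ge_1[of w i]
      unfolding j'_def by (simp add: add.assoc)
  have perW: "periodic_on W D (Sw W i') (length W)"
    using periodic_on_run[OF i'_bounds(3,2)] Dw_W run by simp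
  have Lj': "Lw W j' = j' + D - 1"
    by (rule Lw_eq_of_periodic_root[of j' D "length W" W])
      (use j'W jn Dw_ge_1[of w i] lyj' cwj' periodic_on_mono[OF perW] Sw_W_le j
        in \<open>auto simp: j'_def\<close>)
  have same_run: "Dw W j' = D" "Sw W j' = Sw W i'" "Ew W j' = length W"
    using same_run_of_root[OF i'_bounds(3,2) j'W] Sw_W_le j Lj' Dw_W run jn
    unfolding j'_def by auto
  have "lost W j'"
  proof -
    have "lyndon_fac W (fw W (Sw W j') (Ew W j')) j' (Lw W j')"
      using same_run run lyj' Lj' by simp
    moreover have "j' + Dw W j' \<le> Ew W j'" using same_run run j unfolding j'_def by simp
    moreover have "2 * Dw W j' \<le> Ew W j' - Sw W j' + 1"
      using same_run run Sw_W_le length_append[of w1 "w @ w2"] by simp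
    moreover have "1 < j'" "Sw W j' < j'" using same_run Sw_W_le j jn unfolding j'_def by auto
    ultimately show ?thesis using lost_iff_run_length[of j' W] same_run j'W by auto
  qed
  then show ?thesis using pj unfolding j'_def by blast
qed

end

context
  assumes root_extended: "length w1 + length w < Lw W i'"
begin

lemma root_extended_mismatch:
  obtains k where "i' \<le> k" "k + D \<le> Lw W i'"
    "\<forall>x. i' \<le> x \<longrightarrow> x < k \<longrightarrow> letter W (x + D) = letter W x"
    "letter W k = c" "letter W (k + D) = (\<not> c)"
proof -
  have "lyndon_fac W c i' (Lw W i')" using Lw_spec(3)[OF i'_bounds(3,2)] cw_W by simp
  moreover have "D \<le> Lw W i' - i'" using root_extended L_spec(2,4) Dw_ge_1[of w i] by linarith
  ultimately have "shift_mismatch_in W c i' (Lw W i') D"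
    using lyndon_fac_iff[OF i'_bounds(3) Lw_spec(1,2)[OF i'_bounds(3,2)]] Dw_ge_1[of w i] by auto
  then show ?thesis using that unfolding shift_mismatch_in_def by blast
qed

text \<open>Otherwise the break of the period after \<open>E\<close> would be a mismatch of the right order, and
  \<open>w[i..E+1]\<close> would be a longer Lyndon word than the root.\<close>
lemma run_at_end_if_root_extended: "E = length w"
proof (rule ccontr)
  assume "E \<noteq> length w"
  then have En: "E < length w" using E_spec(2) by simp
  then have break: "letter w (E + 1) \<noteq> letter w (E + 1 - D)" using E_spec(4) by simp
  obtain k where k: "i' \<le> k" "k + D \<le> Lw W i'"
    "\<forall>x. i' \<le> x \<longrightarrow> x < k \<longrightarrow> letter W (x + D) = letter W x"
    "letter W k = c" "letter W (k + D) = (\<not> c)"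
    by (rule root_extended_mismatch)
  have perW: "periodic_on W D i' (length w1 + E)"
    using periodic_on_shift[of i E w w1 w2 D] E_spec(2,3) i_bounds(3) by simp
  have letters: "letter W (length w1 + (E + 1)) = letter w (E + 1)"
    "letter W (length w1 + (E + 1 - D)) = letter w (E + 1 - D)"
    using letter_shift[of "E + 1" w w1 w2] letter_shift[of "E + 1 - D" w w1 w2] En E_spec(1) L_spec(4)
      i_bounds by auto
  have not_before: "\<not> k + D \<le> length w1 + E"
  proof
    assume "k + D \<le> length w1 + E"
    then have "letter W k = letter W (k + D)" using perW k(1) unfolding periodic_on_def by blast
    then show False using k by simp
  qed
  have not_after: "\<not> length w1 + (E + 1 - D) < k"
  proof
    assume "length w1 + (E + 1 - D) < k"
    moreover have "i' \<le> length w1 + (E + 1 - D)" using E_spec(1) L_spec(4) by linarith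
    moreover have "length w1 + (E + 1 - D) + D = length w1 + (E + 1)"
      using E_spec(1) L_spec(4) by linarith
    ultimately show False using k(3) letters break by metis
  qed
  have kk: "k = length w1 + (E + 1 - D)" using not_before not_after E_spec(1) L_spec(4) by linarith
  have kD: "k + D = length w1 + (E + 1)" using kk E_spec(1) L_spec(4) by linarith
  have "letter w (E + 1 - D) = c" "letter w (E + 1) = (\<not> c)"
    using k(4,5) kk kD letters by simp_all
  moreover have "D = L - i + 1" using L_spec(4) Dw_ge_1[of w i] by simp
  ultimately have "lyndon_fac w c i (E + 1)"
    using lyndon_fac_extend[OF i_bounds(3) L_spec(1) E_spec(1) _ L_spec(3) _ E_spec(3)] En by simp
  moreover have "\<not> lyndon_fac w c i (E + 1)"
    using Lw_maximal[OF i_bounds(3,2), of "E + 1"] E_spec(1) En by auto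
  ultimately show False by simp
qed

lemma run_facts_if_root_extended:
  "2 * D \<le> length w - S + 1" "i + D \<le> length w" "S < i" "2 \<le> D" "fw w S (length w) = c"
proof -
  have run: "2 * D \<le> length w - S + 1" "i + D \<le> length w" "S < i"
    "lyndon_fac w (fw w S (length w)) i L"
    using lost_cases run_at_end_if_root_extended by auto
  then show "2 * D \<le> length w - S + 1" "i + D \<le> length w" "S < i" by simp_all
  show D2: "2 \<le> D"
  proof (rule ccontr)
    assume "\<not> 2 \<le> D"
    then have D1: "D = 1" using Dw_ge_1[of w i] by simp
    then have "S \<le> i - 1" "i - 1 + D \<le> L" using run(3) L_spec(4) by auto
    then have "letter w (i - 1) = letter w (i - 1 + D)"
      using S_spec(3) unfolding periodic_on_def by blast
    then have "c = (\<not> letter w i)" using D1 i_bounds unfolding cw_def by simp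
    moreover have "letter W i' = c"
      using lyndon_fac_ends[OF i'_bounds(3) _ Lw_spec(2,3)[OF i'_bounds(3,2)]] root_extended i_bounds cw_W
      by simp
    moreover have "letter W i' = letter w i" using letter_shift[of i w w1 w2] i_bounds by simp
    ultimately show False by simp
  qed
  show "fw w S (length w) = c"
    using lyndon_fac_order_unique[OF i_bounds(3) _ L_spec(2,3) run(4)] L_spec(4) D2 by simp
qed

text \<open>In \<open>w\<^sub>1 w w\<^sub>2\<close> the run of \<open>i\<close> continues beyond \<open>w\<close> up to the mismatch inside the longer root.\<close>
lemma run_prolonged_if_root_extended:
  obtains e where "length w1 + length w \<le> e" "e < length W" "periodic_on W D (length w1 + S) e"
    "letter W (e + 1) = (\<not> c)" "letter W (e + 1 - D) = c"
proof -
  obtain k where k: "i' \<le> k" "k + D \<le> Lw W i'"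
    "\<forall>x. i' \<le> x \<longrightarrow> x < k \<longrightarrow> letter W (x + D) = letter W x"
    "letter W k = c" "letter W (k + D) = (\<not> c)"
    by (rule root_extended_mismatch)
  have perS: "periodic_on W D (length w1 + S) (length w1 + length w)"
    using periodic_on_shift[of S "length w" w w1 w2 D] periodic_on_run[OF i_bounds(3,2)]
      run_at_end_if_root_extended S_spec(1)
    by simp
  have kn: "length w1 + length w < k + D"
  proof (rule ccontr)
    assume "\<not> length w1 + length w < k + D"
    then have "letter W k = letter W (k + D)"
      using perS k(1) S_spec(2) unfolding periodic_on_def by auto
    then show False using k by simp
  qed
  define e where "e = k + D - 1"
  have e: "length w1 + length w \<le> e" "e < length W" "e + 1 = k + D" "e + 1 - D = k"
    using kn k(2) Lw_spec(2)[OF i'_bounds(3,2)] Dw_ge_1[of w i] unfolding e_def by auto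
  have "periodic_on W D i' e"
    unfolding periodic_on_def
  proof (intro allI impI)
    fix x assume "i' \<le> x" "x + D \<le> e"
    moreover have "x < k" using \<open>x + D \<le> e\<close> e(3) by linarith
    ultimately show "letter W x = letter W (x + D)" using k(3) by simp
  qed
  then have "periodic_on W D (length w1 + S) e"
    by (intro periodic_on_union[OF perS]) (use S_spec run_facts_if_root_extended in auto)
  then show ?thesis using that e k by simp
qed

lemma lost_W_partner_if_root_extended:
  assumes pj: "partner w i j"
  shows "lost W (length w1 + j)"
proof -
  obtain e where e: "length w1 + length w \<le> e" "e < length W" "periodic_on W D (length w1 + S) e"
    "letter W (e + 1) = (\<not> c)" "letter W (e + 1 - D) = c"
    by (rule run_prolonged_if_root_extended)
  note run = run_facts_if_root_extended
  from pj have j: "S < j" "j < i" "cw w j = (\<not> c)" "lyndon_fac w (\<not> c) j (j + D - 1)"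
    unfolding partner_def by auto
  define j' where "j' = length w1 + j"
  have jn: "j + D - 1 \<le> length w" "2 \<le> j" using j run S_spec by auto
  have j'W: "1 \<le> j'" "j' \<le> length W" using jn j i_bounds unfolding j'_def by auto
  have cwj': "cw W j' = (\<not> c)"
    using cw_shift[of j w w1 w2] j jn i_bounds(2) unfolding j'_def by simp
  have lyj': "lyndon_fac W (\<not> c) j' (j' + D - 1)"
    using lyndon_fac_W_iff[of j "j + D - 1"] j jn Dw_ge_1[of w i]
      unfolding j'_def by (simp add: add.assoc)
  have per: "periodic_on W D j' e"
    by (rule periodic_on_mono[OF e(3)]) (use j in \<open>auto simp: j'_def\<close>)
  have Lj': "Lw W j' = j' + D - 1"
  proof (rule Lw_eq_of_periodic_root[OF _ _ _ _ _ per])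
    show "1 \<le> j'" "j' + D - 1 \<le> e" "e \<le> length W" "1 \<le> D"
      using j'W jn e Dw_ge_1[of w i] unfolding j'_def by auto
    show "lyndon_fac W (cw W j') j' (j' + D - 1)" using lyj' cwj' by simp
    show "e = length W \<or> letter W (e + 1) = cw W j' \<and> letter W (e + 1 - D) \<noteq> cw W j'"
      using e cwj' by auto
  qed
  have DWj: "Dw W j' = D" unfolding Dw_def Lj' using Dw_ge_1[of w i] by simp
  have EWj: "Ew W j' = e"
    by (rule Ew_eqI[OF j'W]) (use Lj' jn e per DWj in \<open>auto simp: j'_def\<close>)
  have SWj: "Sw W j' \<le> length w1 + S"
    by (rule Sw_le[OF j'W]) (use periodic_on_mono[OF e(3)] DWj Lj' jn e S_spec in \<open>auto simp: j'_def\<close>)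
  have "1 < j'" "Ew W j' < length W" using jn EWj e unfolding j'_def by auto
  moreover have "2 * Dw W j' \<le> Ew W j' - Sw W j' + 1"
    using EWj DWj SWj e run(1) S_spec(2) by linarith
  moreover have "j' + Dw W j' \<le> Ew W j'" using EWj DWj e j run(2) unfolding j'_def by linarith
  ultimately show ?thesis using lost_iff_run_length[of j' W] j'W unfolding j'_def by auto
qed

lemma partner_lost_if_root_extended: "\<exists>j. partner w i j \<and> lost W (length w1 + j)"
  using partner_exists[OF i_bounds(1,2)] run_at_end_if_root_extended run_facts_if_root_extended
    lost_W_partner_if_root_extended by blast

end

lemma partner_lost_if_not_lost:
  assumes "\<not> lost W i'"
  shows "\<exists>j. partner w i j \<and> lost W (length w1 + j)"
  using Lw_shift[OF i_bounds(4,2), of w1 w2] partner_lost_if_root_kept[OF _ assms]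
    partner_lost_if_root_extended by blast

end

lemma partner_bounds:
  assumes "partner w i j"
  shows "1 < j" "j < i"
proof -
  have "1 \<le> i" "i \<le> length w" "Sw w i < j" "j < i" using assms unfolding partner_def by auto
  then show "1 < j" "j < i" using Sw_spec(1)[of i w] by auto
qed

lemma partner_not_less:
  assumes pa: "partner w a j" and pb: "partner w b j"
  shows "\<not> a < b"
proof
  assume ab: "a < b"
  define D where "D = Dw w a"
  have a: "Sw w a < j" "j < a" "Dw w j = D" "Ew w a = length w" "a + D \<le> length w" "2 \<le> D"
    "cw w j = (\<not> cw w a)"
    using pa unfolding partner_def D_def by auto
  have b: "b < j + D" "b + D \<le> length w" "cw w j = (\<not> cw w b)"
    using pb a(3) unfolding partner_def by auto
  have Db: "Dw w b = D" using pb a(3) unfolding partner_def by simp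
  have a1: "1 \<le> a" "a \<le> length w" and b1: "1 \<le> b" "b \<le> length w" using a b ab by auto
  have ly: "lyndon_fac w (cw w a) a (a + D - 1)" "lyndon_fac w (cw w a) b (b + D - 1)"
    using Lw_spec(3)[OF a1] Lw_eq[OF a1] Lw_spec(3)[OF b1] Lw_eq[OF b1] Db a(7) b(3) D_def by auto
  have per: "periodic_on w D (Sw w a) (length w)" using periodic_on_run[OF a1] a(4) D_def by simp
  show False
    by (rule no_close_lyndon_conjugates[OF per _ ab _ _ order.refl _ a(6) ly])
      (use Sw_spec(1,2)[OF a1] a b in auto)
qed

lemma partner_inj: "partner w a j \<Longrightarrow> partner w b j \<Longrightarrow> a = b"
  using partner_not_less linorder_neqE_nat by metis

lemma lost_image_exists:
  assumes "lost w p"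
  shows "\<exists>j. lost (w1 @ w @ w2) (length w1 + j) \<and> (j = p \<or> partner w p j)"
proof -
  interpret lost_position w w1 w2 p by unfold_locales (rule assms)
  show ?thesis using partner_lost_if_not_lost by blast
qed

theorem lemma4:
  fixes w w1 w2 :: "bool list"
  shows "(\<forall>p. lost w p \<longrightarrow> 1 < p \<and> p < length w) \<and>
         (\<exists>\<mu> :: nat \<Rightarrow> nat.
            strict_mono_on {p. lost w p} \<mu> \<and>
            (\<forall>p. lost w p \<longrightarrow>
                 1 \<le> \<mu> p \<and> \<mu> p \<le> length w - 1 \<and>
                 lost (w1 @ w @ w2) (length w1 + \<mu> p) \<and> \<mu> p \<le> p))"
proof -
  define A where "A = {p. lost w p}"
  have "\<forall>p\<in>A. \<exists>j. lost (w1 @ w @ w2) (length w1 + j) \<and> (j = p \<or> partner w p j)"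
    using lost_image_exists unfolding A_def by blast
  then obtain \<phi> where \<phi>:
    "\<And>p. p \<in> A \<Longrightarrow> lost (w1 @ w @ w2) (length w1 + \<phi> p) \<and> (\<phi> p = p \<or> partner w p (\<phi> p))"
    using bchoice by metis
  have \<phi>_range: "1 \<le> \<phi> p \<and> \<phi> p \<le> p" if "p \<in> A" for p
    using \<phi>[OF that] partner_bounds[of w p] lost_bounds[of w p] that unfolding A_def by force
  have "inj_on \<phi> A"
  proof (rule inj_onI)
    fix x y assume xy: "x \<in> A" "y \<in> A" "\<phi> x = \<phi> y"
    \<comment> \<open>partners are not lost, so they never coincide with a fixed point of \<open>\<phi>\<close>\<close>
    have "\<not> partner w y x" "\<not> partner w x y" using xy(1,2) unfolding partner_def A_def by auto
    then show "x = y" using \<phi>[OF xy(1)] \<phi>[OF xy(2)] xy(3) partner_inj by metis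
  qed
  moreover have "finite A"
    unfolding A_def by (rule finite_subset[of _ "{..length w}"]) (auto simp: lost_def)
  ultimately obtain \<mu> where \<mu>: "strict_mono_on A \<mu>" "\<forall>a\<in>A. \<mu> a \<in> \<phi> ` A \<and> \<mu> a \<le> a"
    using strict_mono_on_inj_below[of A \<phi>] \<phi>_range by blast
  have "1 \<le> \<mu> p \<and> \<mu> p \<le> length w - 1 \<and> lost (w1 @ w @ w2) (length w1 + \<mu> p) \<and> \<mu> p \<le> p"
    if "p \<in> A" for p
    using \<mu>(2) that \<phi> \<phi>_range lost_bounds[of w p] unfolding A_def by fastforce
  then show ?thesis using lost_bounds \<mu>(1) unfolding A_def by blast
qed

end
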